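(* Let $F$ be a totally real field, $\mathfrak{g}_0$ a nonzero integral ideal, $\mathfrak{p}$ a prime ideal and $\mathfrak{g}_1=\mathfrak{p}\mathfrak{g}_0$. Let $\mathscr{T}'[\mathfrak{g}_1]=\{\zeta\in\mathscr{T}[\mathfrak{g}_1]:\zeta^{\mathfrak{p}}\in\mathscr{T}_0[\mathfrak{g}_0]\}$ be the inverse image of $\mathscr{T}_0[\mathfrak{g}_0]$ under $(-)^{\mathfrak{p}}\colon\mathscr{T}[\mathfrak{g}_1]\to\mathscr{T}[\mathfrak{g}_0]$. Then $\mathscr{T}'[\mathfrak{g}_1]=\mathscr{T}_0[\mathfrak{g}_1]$ if $\mathfrak{p}\mid\mathfrak{g}_0$, and $\mathscr{T}'[\mathfrak{g}_1]=\mathscr{T}_0[\mathfrak{g}_1]\amalg\mathscr{T}_0[\mathfrak{g}_0]$ if $\mathfrak{p}\nmid\mathfrak{g}_0$.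
   Context: For a nonzero fractional ideal $\mathfrak{a}$ and nonzero integral ideal $\mathfrak{g}$, $\mathbb{T}^{\mathfrak{a}}[\mathfrak{g}](\mathbb{C})$ is the set of characters $\mathfrak{a}\to\mathbb{C}^\times$ trivial on $\mathfrak{g}\mathfrak{a}$, and $\mathbb{T}^{\mathfrak{a}}_0[\mathfrak{g}](\mathbb{C})$ the primitive ones (not trivial on $\mathfrak{g}'\mathfrak{a}$ for any integral $\mathfrak{g}'\supsetneq\mathfrak{g}$). The totally positive elements $F^\times_+$ act on $\coprod_{\mathfrak{a}}\operatorname{Hom}(\mathfrak{a},\mathbb{C}^\times)$ by identifying $\xi'\in\operatorname{Hom}(x\mathfrak{a},\mathbb{C}^\times)$ with $\alpha\mapsto\xi'(x\alpha)$ in $\operatorname{Hom}(\mathfrak{a},\mathbb{C}^\times)$; $\mathscr{T}[\mathfrak{g}]$ and $\mathscr{T}_0[\mathfrak{g}]$ are the orbit sets of $\coprod_{\mathfrak{a}}\mathbb{T}^{\mathfrak{a}}[\mathfrak{g}](\mathbb{C})$ and $\coprod_{\mathfrak{a}}\mathbb{T}^{\mathfrak{a}}_0[\mathfrak{g}](\mathbb{C})$. For $\zeta\in\operatorname{Hom}(\mathfrak{a},\mathbb{C}^\times)$, $\zeta^{\mathfrak{p}}$ is its restriction to $\mathfrak{p}\mathfrak{a}$; this induces maps $\mathscr{T}[\mathfrak{g}_1]\to\mathscr{T}[\mathfrak{g}_0]$. Note $\mathscr{T}[\mathfrak{g}_0]\subset\mathscr{T}[\mathfrak{g}_1]$ since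 characters trivial on $\mathfrak{g}_0\mathfrak{a}$ are trivial on $\mathfrak{g}_1\mathfrak{a}$. *)

theory Defs
  imports "HOL-Computational_Algebra.Polynomial" Complex_Main
begin

definition subfield_C :: "complex set \<Rightarrow> bool" where
  "subfield_C F \<longleftrightarrow> 0 \<in> F \<and> 1 \<in> F \<and>
     (\<forall>x\<in>F. \<forall>y\<in>F. x + y \<in> F \<and> x * y \<in> F) \<and>
     (\<forall>x\<in>F. - x \<in> F \<and> inverse x \<in> F)"

definition number_field :: "complex set \<Rightarrow> bool" where
  "number_field F \<longleftrightarrow> subfield_C F \<and>
     (\<exists>B. finite B \<and> B \<subseteq> F \<and>
        (\<forall>x\<in>F. \<exists>c :: complex \<Rightarrow> rat. x = (\<Sum>b\<in>B. of_rat (c b) * b)))"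

definition embedding :: "complex set \<Rightarrow> (complex \<Rightarrow> complex) \<Rightarrow> bool" where
  "embedding F \<sigma> \<longleftrightarrow> \<sigma> 1 = 1 \<and>
     (\<forall>x\<in>F. \<forall>y\<in>F. \<sigma> (x + y) = \<sigma> x + \<sigma> y \<and> \<sigma> (x * y) = \<sigma> x * \<sigma> y)"

definition totally_real_field :: "complex set \<Rightarrow> bool" where
  "totally_real_field F \<longleftrightarrow> number_field F \<and>
     (\<forall>\<sigma>. embedding F \<sigma> \<longrightarrow> (\<forall>x\<in>F. \<sigma> x \<in> \<real>))"

definition totally_positive :: "complex set \<Rightarrow> complex \<Rightarrow> bool" where
  "totally_positive F x \<longleftrightarrow> x \<in> F \<and> x \<noteq> 0 \<and>
     (\<forall>\<sigma>. embedding F \<sigma> \<longrightarrow> \<sigma> x \<in> \<real> \<and> Re (\<sigma> x) > 0)"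

definition ring_of_integers :: "complex set \<Rightarrow> complex set" where
  "ring_of_integers F = {x \<in> F. algebraic_int x}"

text \<open>Nonzero fractional ideals of F: nonzero finitely generated O_F-submodules of F,
  equivalently nonzero O_F-submodules a of F with d a contained in O_F for some nonzero d in O_F.\<close>
definition fractional_ideal :: "complex set \<Rightarrow> complex set \<Rightarrow> bool" where
  "fractional_ideal F a \<longleftrightarrow> a \<subseteq> F \<and> 0 \<in> a \<and> a \<noteq> {0} \<and>
     (\<forall>x\<in>a. \<forall>y\<in>a. x + y \<in> a) \<and>
     (\<forall>r\<in>ring_of_integers F. \<forall>x\<in>a. r * x \<in> a) \<and>
     (\<exists>d\<in>ring_of_integers F. d \<noteq> 0 \<and> (\<forall>x\<in>a. d * x \<in> ring_of_integers F))"

definition integral_ideal :: "complex set \<Rightarrow> complex set \<Rightarrow> bool" where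
  "integral_ideal F g \<longleftrightarrow> fractional_ideal F g \<and> g \<subseteq> ring_of_integers F"

definition ideal_mult :: "complex set \<Rightarrow> complex set \<Rightarrow> complex set" where
  "ideal_mult a b = {sum_list (map (\<lambda>(x, y). x * y) xs) | xs. set xs \<subseteq> a \<times> b}"

definition prime_ideal :: "complex set \<Rightarrow> complex set \<Rightarrow> bool" where
  "prime_ideal F p \<longleftrightarrow> integral_ideal F p \<and> p \<noteq> ring_of_integers F \<and>
     (\<forall>x\<in>ring_of_integers F. \<forall>y\<in>ring_of_integers F. x * y \<in> p \<longrightarrow> x \<in> p \<or> y \<in> p)"

definition ideal_dvd :: "complex set \<Rightarrow> complex set \<Rightarrow> complex set \<Rightarrow> bool" where
  "ideal_dvd F p g \<longleftrightarrow> (\<exists>c. integral_ideal F c \<and> g = ideal_mult p c)"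

text \<open>A character of the fractional ideal a is a homomorphism (a,+) to the multiplicative
  group of C; represented extensionally (value 1 outside a).\<close>
definition character :: "complex set \<Rightarrow> (complex \<Rightarrow> complex) \<Rightarrow> bool" where
  "character a \<xi> \<longleftrightarrow> (\<forall>x\<in>a. \<xi> x \<noteq> 0) \<and>
     (\<forall>x\<in>a. \<forall>y\<in>a. \<xi> (x + y) = \<xi> x * \<xi> y) \<and> (\<forall>x. x \<notin> a \<longrightarrow> \<xi> x = 1)"

text \<open>The coproduct over all fractional ideals a of Hom(a, C^x), as pairs (a, xi).\<close>
definition all_chars :: "complex set \<Rightarrow> (complex set \<times> (complex \<Rightarrow> complex)) set" where
  "all_chars F = {(a, \<xi>). fractional_ideal F a \<and> character a \<xi>}"

text \<open>Characters of a trivial on g a, i.e. T^a[g](C), as a subset of the coproduct.\<close>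
definition Tchars :: "complex set \<Rightarrow> complex set \<Rightarrow> (complex set \<times> (complex \<Rightarrow> complex)) set" where
  "Tchars F g = {(a, \<xi>) \<in> all_chars F. \<forall>x\<in>ideal_mult g a. \<xi> x = 1}"

definition T0chars :: "complex set \<Rightarrow> complex set \<Rightarrow> (complex set \<times> (complex \<Rightarrow> complex)) set" where
  "T0chars F g = {(a, \<xi>) \<in> Tchars F g. \<forall>g'. integral_ideal F g' \<and> g \<subset> g' \<longrightarrow>
                     \<not> (\<forall>x\<in>ideal_mult g' a. \<xi> x = 1)}"

text \<open>Action of totally positive elements: xi' in Hom(x a, C^x) is identified with
  alpha |-> xi'(x alpha) in Hom(a, C^x).\<close>
definition orbit_rel :: "complex set \<Rightarrow> (complex set \<times> (complex \<Rightarrow> complex)) \<Rightarrow>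
     (complex set \<times> (complex \<Rightarrow> complex)) \<Rightarrow> bool" where
  "orbit_rel F z w \<longleftrightarrow> z \<in> all_chars F \<and> w \<in> all_chars F \<and>
     (\<exists>x. totally_positive F x \<and> fst w = (\<lambda>\<alpha>. x * \<alpha>) ` fst z \<and>
          (\<forall>\<alpha>\<in>fst z. snd w (x * \<alpha>) = snd z \<alpha>))"

definition orbit :: "complex set \<Rightarrow> (complex set \<times> (complex \<Rightarrow> complex)) \<Rightarrow>
     (complex set \<times> (complex \<Rightarrow> complex)) set" where
  "orbit F z = {w. orbit_rel F z w}"

definition scrT :: "complex set \<Rightarrow> complex set \<Rightarrow> (complex set \<times> (complex \<Rightarrow> complex)) set set" where
  "scrT F g = orbit F ` Tchars F g"

definition scrT0 :: "complex set \<Rightarrow> complex set \<Rightarrow> (complex set \<times> (complex \<Rightarrow> complex)) set set" where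
  "scrT0 F g = orbit F ` T0chars F g"

definition restr :: "complex set \<Rightarrow> (complex set \<times> (complex \<Rightarrow> complex)) \<Rightarrow>
     (complex set \<times> (complex \<Rightarrow> complex))" where
  "restr p z = (ideal_mult p (fst z), (\<lambda>x. if x \<in> ideal_mult p (fst z) then snd z x else 1))"

definition restr_orbit :: "complex set \<Rightarrow> complex set \<Rightarrow> (complex set \<times> (complex \<Rightarrow> complex)) set \<Rightarrow>
     (complex set \<times> (complex \<Rightarrow> complex)) set" where
  "restr_orbit F p Ob = orbit F (restr p (SOME z. z \<in> Ob))"

definition scrT' :: "complex set \<Rightarrow> complex set \<Rightarrow> complex set \<Rightarrow> (complex set \<times> (complex \<Rightarrow> complex)) set set" where
  "scrT' F p g0 = {Ob \<in> scrT F (ideal_mult p g0). restr_orbit F p Ob \<in> scrT0 F g0}"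

end

theory Submission
  imports Defs Jordan_Normal_Form.Char_Poly
begin

text \<open>
  The conductor of a character \<open>\<xi>\<close> of \<open>\<aa>\<close> is the ideal \<open>\<ff> = {r \<in> \<O> | \<xi>(r \<aa>) = 1}\<close>. It is
  invariant under the action of \<open>F\<^sup>\<times>\<^sub>+\<close>, \<open>\<xi>\<close> lies in \<open>\<T>[\<gg>]\<close> iff \<open>\<gg> \<subseteq> \<ff>\<close> and is primitive of level
  \<open>\<gg>\<close> iff \<open>\<ff> = \<gg>\<close>, and the restriction \<open>\<xi>\<^sup>\<pp>\<close> has conductor \<open>(\<ff> : \<pp>)\<close>. So the lemma becomes a
  statement about ideals: for \<open>\<pp> \<gg>\<^sub>0 \<subseteq> \<ff>\<close>, \<open>(\<ff> : \<pp>) = \<gg>\<^sub>0\<close> holds iff \<open>\<ff> = \<pp> \<gg>\<^sub>0\<close>, or \<open>\<ff> = \<gg>\<^sub>0\<close>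
  and \<open>\<pp>\<close> does not divide \<open>\<gg>\<^sub>0\<close>. This follows because nonzero ideals of \<open>\<O>\<close> are invertible, so that no ideal
  lies strictly between \<open>\<pp> \<gg>\<^sub>0\<close> and \<open>\<gg>\<^sub>0\<close>. Invertibility is Dedekind's classical argument:
  \<open>\<O>/m\<O>\<close> is finite, nonzero primes are maximal, every nonzero ideal contains a product of
  primes, and hence \<open>\<pp> \<pp>\<^sup>-\<^sup>1 = \<O>\<close>.
\<close>

section \<open>Algebraic integers form a ring\<close>

inductive_set zspan :: "complex set \<Rightarrow> complex set" for S where
  zspan_zero: "0 \<in> zspan S"
| zspan_base: "x \<in> S \<Longrightarrow> x \<in> zspan S"
| zspan_add: "x \<in> zspan S \<Longrightarrow> y \<in> zspan S \<Longrightarrow> x + y \<in> zspan S"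
| zspan_neg: "x \<in> zspan S \<Longrightarrow> - x \<in> zspan S"

lemma zspan_of_int_mult:
  assumes "x \<in> zspan S"
  shows "of_int k * x \<in> zspan S"
proof -
  have of_nat: "of_nat n * x \<in> zspan S" for n
    using assms by (induction n) (auto simp: distrib_right intro: zspan_zero zspan_add)
  show ?thesis
  proof (cases "k \<ge> 0")
    case True
    then show ?thesis using of_nat[of "nat k"] by simp
  next
    case False
    then show ?thesis using zspan_neg[OF of_nat[of "nat (- k)"]] by simp
  qed
qed

lemma zspan_sum: "(\<And>i. i \<in> I \<Longrightarrow> f i \<in> zspan S) \<Longrightarrow> sum f I \<in> zspan S"
  by (induction I rule: infinite_finite_induct) (auto intro: zspan.intros)

lemma zspan_mult_left:
  assumes "\<And>s. s \<in> S \<Longrightarrow> a * s \<in> zspan T" "x \<in> zspan S"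
  shows "a * x \<in> zspan T"
  using assms(2) by induction (auto simp: distrib_left intro: zspan.intros assms(1))

lemma zspan_mult_right:
  assumes "\<And>s. s \<in> S \<Longrightarrow> s * a \<in> zspan T" "x \<in> zspan S"
  shows "x * a \<in> zspan T"
  using zspan_mult_left[of S a T x] assms by (simp add: mult.commute)

lemma zspan_set_imp_int_combination:
  assumes "x \<in> zspan (set vs)"
  shows "\<exists>c::nat \<Rightarrow> int. x = (\<Sum>j<length vs. of_int (c j) * vs ! j)"
  using assms
proof induction
  case zspan_zero
  show ?case by (intro exI[of _ "\<lambda>_. 0"]) simp
next
  case (zspan_base x)
  then obtain i where i: "i < length vs" "vs ! i = x" by (auto simp: in_set_conv_nth)
  show ?case
    by (intro exI[of _ "\<lambda>j. if j = i then 1 else 0"])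
      (simp add: i if_distrib[of "\<lambda>z. of_int z * _"] sum.delta cong: if_cong)
next
  case (zspan_add x y)
  then obtain c d where "x = (\<Sum>j<length vs. of_int (c j) * vs ! j)"
    "y = (\<Sum>j<length vs. of_int (d j) * vs ! j)" by blast
  then show ?case by (intro exI[of _ "\<lambda>j. c j + d j"]) (simp add: sum.distrib distrib_right)
next
  case (zspan_neg x)
  then obtain c where "x = (\<Sum>j<length vs. of_int (c j) * vs ! j)" by blast
  then show ?case by (intro exI[of _ "\<lambda>j. - c j"]) (simp add: sum_negf)
qed

lemma algebraic_int_eigenvalue_int_mat:
  fixes C :: "int mat" and v :: "complex vec"
  assumes C: "C \<in> carrier_mat n n" and v: "v \<in> carrier_vec n" "v \<noteq> 0\<^sub>v n"
    and eigen: "map_mat of_int C *\<^sub>v v = y \<cdot>\<^sub>v v"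
  shows "algebraic_int y"
proof -
  have Cc: "map_mat of_int C \<in> carrier_mat n n" using C by simp
  have "eigenvalue (map_mat of_int C) y"
    using v eigen Cc unfolding eigenvalue_def eigenvector_def by auto
  then have "poly (char_poly (map_mat of_int C)) y = 0"
    using eigenvalue_root_char_poly[OF Cc] by blast
  also have "char_poly (map_mat of_int C) = map_poly of_int (char_poly C)"
    by (rule of_int_hom.char_poly_hom[OF C])
  finally have "poly (map_poly of_int (char_poly C)) y = 0" .
  moreover have "lead_coeff (char_poly C) = 1"
    using degree_monic_char_poly[OF C] by simp
  ultimately show ?thesis
    unfolding algebraic_int_altdef_ipoly by blast
qed

lemma algebraic_int_if_zspan_stable:
  assumes T: "finite T" "\<exists>v\<in>T. v \<noteq> 0" and stable: "\<And>v. v \<in> T \<Longrightarrow> y * v \<in> zspan T"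
  shows "algebraic_int y"
proof -
  obtain vs where vs: "set vs = T" using finite_list[OF T(1)] by blast
  define n where "n = length vs"
  have "y * vs ! i \<in> zspan (set vs)" if "i < n" for i
    using stable[of "vs ! i"] nth_mem[of i vs] that vs unfolding n_def by simp
  then have "\<forall>i. \<exists>c::nat \<Rightarrow> int. i < n \<longrightarrow> y * vs ! i = (\<Sum>j<n. of_int (c j) * vs ! j)"
    using zspan_set_imp_int_combination unfolding n_def by blast
  from choice[OF this] obtain c
    where c: "\<And>i. i < n \<Longrightarrow> y * vs ! i = (\<Sum>j<n. of_int (c i j) * vs ! j)"
    by blast
  define v :: "complex vec" where "v = vec n (\<lambda>j. vs ! j)"
  show ?thesis
  proof (rule algebraic_int_eigenvalue_int_mat)
    show "mat n n (\<lambda>(i, j). c i j) \<in> carrier_mat n n" "v \<in> carrier_vec n"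
      by (simp_all add: v_def)
    show "v \<noteq> 0\<^sub>v n"
    proof
      assume "v = 0\<^sub>v n"
      then have "vs ! j = 0" if "j < n" for j
        using that unfolding v_def by (metis index_vec index_zero_vec(1))
      moreover obtain w where "w \<in> set vs" "w \<noteq> 0" using T(2) vs by blast
      ultimately show False unfolding in_set_conv_nth n_def by blast
    qed
    show "map_mat of_int (mat n n (\<lambda>(i, j). c i j)) *\<^sub>v v = y \<cdot>\<^sub>v v"
    proof (rule eq_vecI)
      fix i assume "i < dim_vec (y \<cdot>\<^sub>v v)"
      then have i: "i < n" by (simp add: v_def)
      have "(map_mat of_int (mat n n (\<lambda>(i, j). c i j)) *\<^sub>v v) $ i
          = (\<Sum>j<n. of_int (c i j) * vs ! j)"
        using i by (simp add: v_def mult_mat_vec_def scalar_prod_def atLeast0LessThan)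
      also have "\<dots> = (y \<cdot>\<^sub>v v) $ i" using c[OF i] i by (simp add: v_def)
      finally show "(map_mat of_int (mat n n (\<lambda>(i, j). c i j)) *\<^sub>v v) $ i = (y \<cdot>\<^sub>v v) $ i" .
    qed (simp add: v_def)
  qed
qed

lemma algebraic_int_power_eq_lower_powers:
  assumes "algebraic_int (a :: complex)"
  obtains d c where "d > 0" "a ^ d = (\<Sum>i<d. of_int (c i) * a ^ i)"
proof -
  obtain p where p: "poly (map_poly of_int p) a = 0" "lead_coeff p = 1"
    using assms unfolding algebraic_int_altdef_ipoly by blast
  define d where "d = degree p"
  have pa: "poly (map_poly of_int p) a = (\<Sum>i\<le>d. of_int (coeff p i) * a ^ i)"
    unfolding poly_altdef d_def degree_map_poly[of of_int p, simplified]
    by (simp add: coeff_map_poly)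
  have "d > 0"
  proof (rule ccontr)
    assume "\<not> d > 0"
    then have "poly (map_poly of_int p) a = of_int (coeff p 0)" "coeff p 0 = 1"
      using p(2) unfolding pa d_def by simp_all
    then show False using p(1) by simp
  qed
  have "0 = (\<Sum>i<d. of_int (coeff p i) * a ^ i) + of_int (coeff p d) * a ^ d"
    using p(1) pa unfolding lessThan_Suc_atMost[symmetric] by simp
  moreover have "coeff p d = 1" using p(2) unfolding d_def by simp
  ultimately have "a ^ d = (\<Sum>i<d. of_int (- coeff p i) * a ^ i)"
    by (simp add: eq_neg_iff_add_eq_0 add.commute sum_negf)
  with \<open>d > 0\<close> show ?thesis by (rule that)
qed

text \<open>The witness \<open>T\<close> consists of monomials of bounded degree in \<open>A\<close>; it spans \<open>\<int>[A]\<close>.\<close>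
lemma exists_finite_zspan_stable:
  assumes "finite A" "\<And>a. a \<in> A \<Longrightarrow> algebraic_int a"
  shows "\<exists>T. finite T \<and> 1 \<in> T \<and> (\<forall>a\<in>A. \<forall>t\<in>T. a * t \<in> zspan T)"
  using assms
proof (induction A rule: finite_induct)
  case empty
  then show ?case by (intro exI[of _ "{1}"]) auto
next
  case (insert a A)
  then obtain T where T: "finite T" "1 \<in> T" "\<And>b t. b \<in> A \<Longrightarrow> t \<in> T \<Longrightarrow> b * t \<in> zspan T"
    by blast
  obtain d c where d: "d > 0" "a ^ d = (\<Sum>i<d. of_int (c i) * a ^ i)"
    using algebraic_int_power_eq_lower_powers[of a] insert.prems by blast
  define T' where "T' = (\<lambda>(t, i). t * a ^ i) ` (T \<times> {..<d})"
  have T'I: "t * a ^ i \<in> T'" if "t \<in> T" "i < d" for t i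
    using that unfolding T'_def by force
  have "b * t' \<in> zspan T'" if b: "b \<in> insert a A" and t': "t' \<in> T'" for b t'
  proof -
    obtain t i where ti: "t \<in> T" "i < d" "t' = t * a ^ i" using t' unfolding T'_def by auto
    consider "b = a" "Suc i < d" | "b = a" "Suc i = d" | "b \<in> A"
      using b ti(2) by (metis insertE Suc_lessI)
    then show ?thesis
    proof cases
      case 1
      then show ?thesis using T'I[OF ti(1) 1(2)] ti(3) by (auto simp: mult_ac intro: zspan_base)
    next
      case 2
      then have "b * t' = t * a ^ d" using ti(3) by (auto simp: mult_ac)
      also have "\<dots> = (\<Sum>k<d. of_int (c k) * (t * a ^ k))"
        by (simp add: d(2) sum_distrib_left mult_ac)
      also have "\<dots> \<in> zspan T'"
        by (intro zspan_sum zspan_of_int_mult zspan_base T'I ti(1)) auto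
      finally show ?thesis .
    next
      case 3
      have "b * t' = (b * t) * a ^ i" using ti(3) by (simp add: mult_ac)
      also have "\<dots> \<in> zspan T'"
        by (rule zspan_mult_right[OF _ T(3)[OF 3 ti(1)]]) (use T'I ti(2) in \<open>auto intro: zspan_base\<close>)
      finally show ?thesis .
    qed
  qed
  moreover have "finite T'" "1 \<in> T'" using T(1) T'I[OF T(2) d(1)] by (simp_all add: T'_def)
  ultimately show ?case by blast
qed

lemma algebraic_int_plus_times:
  fixes x y :: complex
  assumes "algebraic_int x" "algebraic_int y"
  shows "algebraic_int (x + y)" and "algebraic_int (x * y)"
proof -
  have "finite {x, y}" "\<And>a. a \<in> {x, y} \<Longrightarrow> algebraic_int a" using assms by auto
  from exists_finite_zspan_stable[OF this] obtain T where
    T: "finite T" "1 \<in> T" "\<And>a t. a \<in> {x, y} \<Longrightarrow> t \<in> T \<Longrightarrow> a * t \<in> zspan T"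
    by blast
  have nonzero: "\<exists>v\<in>T. v \<noteq> 0" using T(2) by (intro bexI[of _ 1]) simp_all
  show "algebraic_int (x + y)"
  proof (rule algebraic_int_if_zspan_stable[OF T(1) nonzero])
    fix v assume "v \<in> T"
    then show "(x + y) * v \<in> zspan T"
      using T(3)[of x v] T(3)[of y v] by (simp add: distrib_right zspan_add)
  qed
  show "algebraic_int (x * y)"
  proof (rule algebraic_int_if_zspan_stable[OF T(1) nonzero])
    fix v assume "v \<in> T"
    then have "y * v \<in> zspan T" using T(3) by simp
    then have "x * (y * v) \<in> zspan T"
      by (rule zspan_mult_left[rotated]) (use T(3) in simp)
    then show "x * y * v \<in> zspan T" by (simp add: mult.assoc)
  qed
qed

lemma algebraic_int_if_stable_span:
  fixes y :: complex
  assumes W: "finite W" "\<exists>w\<in>W. w \<noteq> 0"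
    and stable: "\<And>w. w \<in> W \<Longrightarrow>
      \<exists>f. (\<forall>w'\<in>W. algebraic_int (f w')) \<and> y * w = (\<Sum>w'\<in>W. f w' * w')"
  shows "algebraic_int y"
proof -
  from stable have "\<forall>w. \<exists>f. w \<in> W \<longrightarrow>
      (\<forall>w'\<in>W. algebraic_int (f w')) \<and> y * w = (\<Sum>w'\<in>W. f w' * w')"
    by blast
  from choice[OF this] obtain f
    where f: "\<And>w w'. w \<in> W \<Longrightarrow> w' \<in> W \<Longrightarrow> algebraic_int (f w w')"
      "\<And>w. w \<in> W \<Longrightarrow> y * w = (\<Sum>w'\<in>W. f w w' * w')"
    by blast
  define A where "A = (\<lambda>(w, w'). f w w') ` (W \<times> W)"
  have "finite A" "\<And>a. a \<in> A \<Longrightarrow> algebraic_int a" using W(1) f(1) by (auto simp: A_def)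
  from exists_finite_zspan_stable[OF this] obtain T where
    T: "finite T" "1 \<in> T" "\<And>a t. a \<in> A \<Longrightarrow> t \<in> T \<Longrightarrow> a * t \<in> zspan T"
    by blast
  define M where "M = (\<lambda>(t, w). t * w) ` (T \<times> W)"
  have MI: "t * w \<in> M" if "t \<in> T" "w \<in> W" for t w using that unfolding M_def by force
  show ?thesis
  proof (rule algebraic_int_if_zspan_stable[of M])
    show "finite M" using T(1) W(1) by (simp add: M_def)
    show "\<exists>v\<in>M. v \<noteq> 0" using W(2) MI[OF T(2)] by force
    fix v assume "v \<in> M"
    then obtain t w where tw: "t \<in> T" "w \<in> W" "v = t * w" unfolding M_def by auto
    have "y * v = t * (y * w)" using tw(3) by (simp add: mult_ac)
    also have "\<dots> = (\<Sum>w'\<in>W. (f w w' * t) * w')"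
      using f(2)[OF tw(2)] by (simp add: sum_distrib_left mult_ac)
    also have "\<dots> \<in> zspan M"
    proof (rule zspan_sum)
      fix w' assume w': "w' \<in> W"
      have "f w w' \<in> A" using tw(2) w' by (auto simp: A_def)
      then have "f w w' * t \<in> zspan T" using T(3) tw(1) by blast
      then show "(f w w' * t) * w' \<in> zspan M"
        by (rule zspan_mult_right[rotated]) (use MI w' in \<open>auto intro: zspan_base\<close>)
    qed
    finally show "y * v \<in> zspan M" .
  qed
qed

section \<open>Products of sets of complex numbers\<close>

lemma ideal_mult_induct[consumes 1, case_names zero prod add]:
  assumes "x \<in> ideal_mult A B"
    and "P 0"
    and "\<And>a b. a \<in> A \<Longrightarrow> b \<in> B \<Longrightarrow> P (a * b)"
    and "\<And>x y. P x \<Longrightarrow> P y \<Longrightarrow> P (x + y)"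
  shows "P x"
proof -
  obtain xs where xs: "x = sum_list (map (\<lambda>(x, y). x * y) xs)" "set xs \<subseteq> A \<times> B"
    using assms(1) unfolding ideal_mult_def by blast
  have "P (sum_list (map (\<lambda>(x, y). x * y) xs))" using xs(2)
  proof (induction xs)
    case Nil
    then show ?case using assms(2) by simp
  next
    case (Cons ab xs)
    then show ?case using assms(3,4) by (cases ab) auto
  qed
  then show ?thesis using xs(1) by simp
qed

lemma zero_in_ideal_mult[simp, intro]: "0 \<in> ideal_mult A B"
  unfolding ideal_mult_def by (rule CollectI, rule exI[of _ "[]"]) simp

lemma mult_in_ideal_mult[intro]: "a \<in> A \<Longrightarrow> b \<in> B \<Longrightarrow> a * b \<in> ideal_mult A B"
  unfolding ideal_mult_def by (rule CollectI, rule exI[of _ "[(a, b)]"]) simp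

lemma add_in_ideal_mult[intro]:
  assumes "x \<in> ideal_mult A B" "y \<in> ideal_mult A B"
  shows "x + y \<in> ideal_mult A B"
proof -
  obtain xs ys where "x = sum_list (map (\<lambda>(x, y). x * y) xs)" "set xs \<subseteq> A \<times> B"
    "y = sum_list (map (\<lambda>(x, y). x * y) ys)" "set ys \<subseteq> A \<times> B"
    using assms unfolding ideal_mult_def by blast
  then show ?thesis unfolding ideal_mult_def by (intro CollectI exI[of _ "xs @ ys"]) auto
qed

lemma ideal_mult_least:
  assumes "0 \<in> C" "\<And>a b. a \<in> A \<Longrightarrow> b \<in> B \<Longrightarrow> a * b \<in> C"
    "\<And>x y. x \<in> C \<Longrightarrow> y \<in> C \<Longrightarrow> x + y \<in> C"
  shows "ideal_mult A B \<subseteq> C"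
proof
  fix x assume "x \<in> ideal_mult A B"
  then show "x \<in> C" by (induction rule: ideal_mult_induct) (use assms in auto)
qed

lemma ideal_mult_commute: "ideal_mult A B = ideal_mult B A"
proof -
  have *: "ideal_mult A B \<subseteq> ideal_mult B A" for A B
  proof (rule ideal_mult_least)
    fix a b assume "a \<in> A" "b \<in> B"
    then have "b * a \<in> ideal_mult B A" by (intro mult_in_ideal_mult)
    then show "a * b \<in> ideal_mult B A" by (simp add: mult.commute)
  qed auto
  show ?thesis using *[of A B] *[of B A] by blast
qed

lemma ideal_mult_mono: "A \<subseteq> A' \<Longrightarrow> B \<subseteq> B' \<Longrightarrow> ideal_mult A B \<subseteq> ideal_mult A' B'"
  by (rule ideal_mult_least) auto

lemma mult_right_in_ideal_mult_assoc:
  assumes "x \<in> ideal_mult A B" "c \<in> C"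
  shows "x * c \<in> ideal_mult A (ideal_mult B C)"
  using assms(1)
  by (induction rule: ideal_mult_induct) (auto simp: distrib_right mult.assoc intro: assms(2))

lemma ideal_mult_assoc: "ideal_mult (ideal_mult A B) C = ideal_mult A (ideal_mult B C)"
proof
  show "ideal_mult (ideal_mult A B) C \<subseteq> ideal_mult A (ideal_mult B C)"
    by (rule ideal_mult_least) (auto intro: mult_right_in_ideal_mult_assoc)
next
  have "ideal_mult A (ideal_mult B C) = ideal_mult (ideal_mult C B) A"
    by (simp add: ideal_mult_commute)
  also have "\<dots> \<subseteq> ideal_mult C (ideal_mult B A)"
    by (rule ideal_mult_least) (auto intro: mult_right_in_ideal_mult_assoc)
  also have "\<dots> = ideal_mult (ideal_mult A B) C"
    by (simp add: ideal_mult_commute)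
  finally show "ideal_mult A (ideal_mult B C) \<subseteq> ideal_mult (ideal_mult A B) C" .
qed

lemma ideal_mult_left_commute:
  "ideal_mult A (ideal_mult B C) = ideal_mult B (ideal_mult A C)"
proof -
  have "ideal_mult A (ideal_mult B C) = ideal_mult (ideal_mult A B) C"
    by (simp only: ideal_mult_assoc)
  also have "\<dots> = ideal_mult (ideal_mult B A) C" by (simp only: ideal_mult_commute[of A B])
  also have "\<dots> = ideal_mult B (ideal_mult A C)" by (simp only: ideal_mult_assoc)
  finally show ?thesis .
qed

lemma scalar_mult_in_ideal_mult:
  assumes "x \<in> ideal_mult A B" "\<And>a. a \<in> A \<Longrightarrow> r * a \<in> A"
  shows "r * x \<in> ideal_mult A B"
  using assms(1)
  by (induction rule: ideal_mult_induct) (auto simp: distrib_left mult.assoc[symmetric] intro: assms(2))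

lemma ideal_mult_nonzero:
  fixes A B :: "complex set"
  assumes "a \<in> A" "a \<noteq> 0" "b \<in> B" "b \<noteq> 0"
  shows "ideal_mult A B \<noteq> {0}"
proof
  assume "ideal_mult A B = {0}"
  then have "a * b = 0" using mult_in_ideal_mult[OF assms(1,3)] by blast
  then show False using assms(2,4) by simp
qed

section \<open>Ideals of the ring of integers\<close>

locale numfield =
  fixes F :: "complex set"
  assumes number_field: "number_field F"
begin

abbreviation \<O> where "\<O> \<equiv> ring_of_integers F"

lemma F_0[simp, intro]: "0 \<in> F" and F_1[simp, intro]: "1 \<in> F"
  and F_add[intro]: "x \<in> F \<Longrightarrow> y \<in> F \<Longrightarrow> x + y \<in> F"
  and F_mult[intro]: "x \<in> F \<Longrightarrow> y \<in> F \<Longrightarrow> x * y \<in> F"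
  and F_uminus[intro]: "x \<in> F \<Longrightarrow> - x \<in> F"
  and F_inverse[intro]: "x \<in> F \<Longrightarrow> inverse x \<in> F"
  using number_field unfolding number_field_def subfield_C_def by auto

lemma F_of_int[intro]: "of_int k \<in> F"
proof -
  have of_nat: "of_nat n \<in> F" for n by (induction n) auto
  show ?thesis
  proof (cases "k \<ge> 0")
    case True
    then show ?thesis using of_nat[of "nat k"] by simp
  next
    case False
    then show ?thesis using F_uminus[OF of_nat[of "nat (- k)"]] by simp
  qed
qed

lemma F_divide[intro]: "x \<in> F \<Longrightarrow> y \<in> F \<Longrightarrow> x / y \<in> F"
  using F_mult[of x "inverse y"] F_inverse[of y] by (simp add: divide_inverse)

lemma O_iff: "x \<in> \<O> \<longleftrightarrow> x \<in> F \<and> algebraic_int x"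
  unfolding ring_of_integers_def by simp

lemma O_F[intro]: "x \<in> \<O> \<Longrightarrow> x \<in> F" and O_algebraic_int[intro]: "x \<in> \<O> \<Longrightarrow> algebraic_int x"
  by (auto simp: O_iff)

lemma O_0[simp, intro]: "0 \<in> \<O>" and O_1[simp, intro]: "1 \<in> \<O>"
  and O_of_int[intro]: "of_int k \<in> \<O>"
  by (auto simp: O_iff)

lemma O_add[intro]: "x \<in> \<O> \<Longrightarrow> y \<in> \<O> \<Longrightarrow> x + y \<in> \<O>"
  and O_mult[intro]: "x \<in> \<O> \<Longrightarrow> y \<in> \<O> \<Longrightarrow> x * y \<in> \<O>"
  and O_uminus[intro]: "x \<in> \<O> \<Longrightarrow> - x \<in> \<O>"
  by (auto simp: O_iff intro: algebraic_int_plus_times)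

lemma O_diff[intro]: "x \<in> \<O> \<Longrightarrow> y \<in> \<O> \<Longrightarrow> x - y \<in> \<O>"
  using O_add[of x "- y"] O_uminus[of y] by simp

lemma O_sum[intro]: "(\<And>i. i \<in> I \<Longrightarrow> f i \<in> \<O>) \<Longrightarrow> sum f I \<in> \<O>"
  by (induction I rule: infinite_finite_induct) auto

lemma O_power[intro]: "x \<in> \<O> \<Longrightarrow> x ^ n \<in> \<O>"
  by (induction n) auto

lemma O_poly_of_int[intro]: "x \<in> \<O> \<Longrightarrow> poly (map_poly of_int p) x \<in> \<O>"
  by (simp add: poly_altdef) (intro O_sum O_mult O_power; simp add: O_of_int)

text \<open>\<open>O_ideal\<close> admits the zero ideal, unlike \<^const>\<open>integral_ideal\<close>; \<open>O_module\<close> is an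
  \<open>\<O>\<close>-submodule of \<open>F\<close>, e.g.\ a fractional ideal or the inverse of an ideal.\<close>
definition O_ideal :: "complex set \<Rightarrow> bool" where
  "O_ideal I \<longleftrightarrow> I \<subseteq> \<O> \<and> 0 \<in> I \<and> (\<forall>x\<in>I. \<forall>y\<in>I. x + y \<in> I) \<and> (\<forall>r\<in>\<O>. \<forall>x\<in>I. r * x \<in> I)"

definition O_module :: "complex set \<Rightarrow> bool" where
  "O_module M \<longleftrightarrow> M \<subseteq> F \<and> 0 \<in> M \<and> (\<forall>x\<in>M. \<forall>y\<in>M. x + y \<in> M) \<and> (\<forall>r\<in>\<O>. \<forall>x\<in>M. r * x \<in> M)"

lemma O_idealI:
  assumes "I \<subseteq> \<O>" "0 \<in> I" "\<And>x y. x \<in> I \<Longrightarrow> y \<in> I \<Longrightarrow> x + y \<in> I"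
    "\<And>r x. r \<in> \<O> \<Longrightarrow> x \<in> I \<Longrightarrow> r * x \<in> I"
  shows "O_ideal I"
  using assms unfolding O_ideal_def by blast

lemma O_moduleI:
  assumes "M \<subseteq> F" "0 \<in> M" "\<And>x y. x \<in> M \<Longrightarrow> y \<in> M \<Longrightarrow> x + y \<in> M"
    "\<And>r x. r \<in> \<O> \<Longrightarrow> x \<in> M \<Longrightarrow> r * x \<in> M"
  shows "O_module M"
  using assms unfolding O_module_def by blast

lemma O_idealD:
  assumes "O_ideal I"
  shows "I \<subseteq> \<O>" "0 \<in> I" "\<And>x y. x \<in> I \<Longrightarrow> y \<in> I \<Longrightarrow> x + y \<in> I"
    "\<And>r x. r \<in> \<O> \<Longrightarrow> x \<in> I \<Longrightarrow> r * x \<in> I"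
  using assms unfolding O_ideal_def by blast+

lemma O_moduleD:
  assumes "O_module M"
  shows "M \<subseteq> F" "0 \<in> M" "\<And>x y. x \<in> M \<Longrightarrow> y \<in> M \<Longrightarrow> x + y \<in> M"
    "\<And>r x. r \<in> \<O> \<Longrightarrow> x \<in> M \<Longrightarrow> r * x \<in> M"
  using assms unfolding O_module_def by blast+

lemma O_ideal_imp_O_module: "O_ideal I \<Longrightarrow> O_module I"
  unfolding O_ideal_def O_module_def by auto

lemma O_module_diff:
  assumes "O_module M" "x \<in> M" "y \<in> M"
  shows "x - y \<in> M"
proof -
  have "- 1 \<in> \<O>" by (intro O_uminus O_1)
  from O_moduleD(4)[OF assms(1) this assms(3)] have "- y \<in> M" by simp
  from O_moduleD(3)[OF assms(1,2) this] show ?thesis by simp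
qed

lemma O_ideal_diff: "O_ideal I \<Longrightarrow> x \<in> I \<Longrightarrow> y \<in> I \<Longrightarrow> x - y \<in> I"
  using O_module_diff[OF O_ideal_imp_O_module] .

lemma O_ideal_mult_right: "O_ideal I \<Longrightarrow> x \<in> I \<Longrightarrow> r \<in> \<O> \<Longrightarrow> x * r \<in> I"
  using O_idealD(4)[of I r x] by (simp add: mult.commute)

lemma O_ideal_nonzero_elem: "O_ideal I \<Longrightarrow> I \<noteq> {0} \<Longrightarrow> \<exists>x\<in>I. x \<noteq> 0"
  using O_idealD(2) by blast

lemma O_ideal_nonzero_mono: "O_ideal I \<Longrightarrow> I \<noteq> {0} \<Longrightarrow> I \<subseteq> J \<Longrightarrow> J \<noteq> {0}"
  using O_ideal_nonzero_elem by blast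

lemma O_ideal_O: "O_ideal \<O>"
  by (rule O_idealI) auto

lemma O_ideal_eq_O_iff_one: "O_ideal I \<Longrightarrow> I = \<O> \<longleftrightarrow> 1 \<in> I"
  using O_idealD(1,4)[of I] by (metis O_1 mult.right_neutral subsetI subset_antisym)

lemma O_module_ideal_mult: "O_module A \<Longrightarrow> O_module B \<Longrightarrow> O_module (ideal_mult A B)"
proof (rule O_moduleI)
  assume A: "O_module A" and B: "O_module B"
  show "ideal_mult A B \<subseteq> F"
    by (rule ideal_mult_least) (use O_moduleD[OF A] O_moduleD[OF B] in auto)
  show "\<And>r x. r \<in> \<O> \<Longrightarrow> x \<in> ideal_mult A B \<Longrightarrow> r * x \<in> ideal_mult A B"
    by (rule scalar_mult_in_ideal_mult) (use O_moduleD[OF A] in auto)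
qed auto

lemma O_ideal_ideal_mult_if_subset:
  assumes "O_ideal A" "O_module B" "ideal_mult A B \<subseteq> \<O>"
  shows "O_ideal (ideal_mult A B)"
  using O_module_ideal_mult[OF O_ideal_imp_O_module[OF assms(1)] assms(2)] assms(3)
  unfolding O_module_def O_ideal_def by blast

lemma O_ideal_ideal_mult:
  assumes "O_ideal A" "O_ideal B"
  shows "O_ideal (ideal_mult A B)"
proof (rule O_ideal_ideal_mult_if_subset[OF assms(1) O_ideal_imp_O_module[OF assms(2)]])
  show "ideal_mult A B \<subseteq> \<O>"
    by (rule ideal_mult_least) (use O_idealD(1)[OF assms(1)] O_idealD(1)[OF assms(2)] in auto)
qed

lemma ideal_mult_O_left: "O_module M \<Longrightarrow> ideal_mult \<O> M = M"
proof
  assume M: "O_module M"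
  show "ideal_mult \<O> M \<subseteq> M" by (rule ideal_mult_least) (use O_moduleD[OF M] in auto)
  show "M \<subseteq> ideal_mult \<O> M"
  proof
    fix x assume "x \<in> M"
    then have "1 * x \<in> ideal_mult \<O> M" by (intro mult_in_ideal_mult) auto
    then show "x \<in> ideal_mult \<O> M" by simp
  qed
qed

lemma ideal_mult_O_right: "O_module M \<Longrightarrow> ideal_mult M \<O> = M"
  using ideal_mult_O_left by (simp add: ideal_mult_commute)

lemma ideal_mult_subset_right: "O_ideal P \<Longrightarrow> O_module M \<Longrightarrow> ideal_mult P M \<subseteq> M"
  by (rule ideal_mult_least) (auto dest: O_idealD(1) O_moduleD)

lemma integral_ideal_iff: "integral_ideal F I \<longleftrightarrow> O_ideal I \<and> I \<noteq> {0}"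
proof
  assume "integral_ideal F I"
  then show "O_ideal I \<and> I \<noteq> {0}"
    unfolding integral_ideal_def fractional_ideal_def O_ideal_def by blast
next
  assume I: "O_ideal I \<and> I \<noteq> {0}"
  have "\<forall>x\<in>I. 1 * x \<in> \<O>" using I O_idealD(1) by auto
  then show "integral_ideal F I"
    using I unfolding integral_ideal_def fractional_ideal_def O_ideal_def
    by (intro conjI) (auto intro!: bexI[of _ 1])
qed

lemma prime_idealD:
  assumes "prime_ideal F P"
  shows "O_ideal P" "P \<noteq> {0}" "P \<noteq> \<O>"
    "\<And>x y. x \<in> \<O> \<Longrightarrow> y \<in> \<O> \<Longrightarrow> x * y \<in> P \<Longrightarrow> x \<in> P \<or> y \<in> P"
  using assms unfolding prime_ideal_def integral_ideal_iff by blast+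

lemma ideal_dvd_iff:
  "ideal_dvd F P G \<longleftrightarrow> (\<exists>C. O_ideal C \<and> C \<noteq> {0} \<and> G = ideal_mult P C)"
  unfolding ideal_dvd_def integral_ideal_iff by blast

definition principal :: "complex \<Rightarrow> complex set" where
  "principal a = (\<lambda>r. a * r) ` \<O>"

lemma principal_mem: "r \<in> \<O> \<Longrightarrow> a * r \<in> principal a"
  unfolding principal_def by auto

lemma principal_self: "a \<in> principal a"
  using principal_mem[of 1 a] by simp

lemma O_ideal_principal: "a \<in> \<O> \<Longrightarrow> O_ideal (principal a)"
  unfolding principal_def
  by (rule O_idealI) (auto simp: distrib_left[symmetric] mult.left_commute intro!: image_eqI)

lemma principal_subset: "O_ideal I \<Longrightarrow> a \<in> I \<Longrightarrow> principal a \<subseteq> I"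
  unfolding principal_def by (auto dest: O_idealD simp: mult.commute[of a])

definition ideal_add :: "complex set \<Rightarrow> complex set \<Rightarrow> complex set" where
  "ideal_add I J = {x + y | x y. x \<in> I \<and> y \<in> J}"

lemma O_ideal_ideal_add:
  assumes I: "O_ideal I" and J: "O_ideal J"
  shows "O_ideal (ideal_add I J)"
proof (rule O_idealI)
  note I' = O_idealD[OF I] and J' = O_idealD[OF J]
  show "ideal_add I J \<subseteq> \<O>" using I'(1) J'(1) by (auto simp: ideal_add_def)
  show "0 \<in> ideal_add I J" using I'(2) J'(2) unfolding ideal_add_def by force
  show "x + y \<in> ideal_add I J" if xy: "x \<in> ideal_add I J" "y \<in> ideal_add I J" for x y
  proof -
    obtain a b c d where "a \<in> I" "b \<in> J" "c \<in> I" "d \<in> J" "x = a + b" "y = c + d"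
      using xy unfolding ideal_add_def by blast
    then show ?thesis unfolding ideal_add_def
      by (intro CollectI exI[of _ "a + c"] exI[of _ "b + d"]) (auto simp: I'(3) J'(3) algebra_simps)
  qed
  show "r * x \<in> ideal_add I J" if rx: "r \<in> \<O>" "x \<in> ideal_add I J" for r x
  proof -
    obtain a b where "a \<in> I" "b \<in> J" "x = a + b"
      using rx unfolding ideal_add_def by blast
    moreover have "r * a \<in> I" "r * b \<in> J" using rx(1) \<open>a \<in> I\<close> \<open>b \<in> J\<close> I'(4) J'(4) by auto
    ultimately show ?thesis unfolding ideal_add_def
      by (intro CollectI exI[of _ "r * a"] exI[of _ "r * b"]) (simp add: distrib_left)
  qed
qed

lemma ideal_add_left: "O_ideal J \<Longrightarrow> I \<subseteq> ideal_add I J"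
  unfolding ideal_add_def by (force dest: O_idealD(2))

lemma ideal_add_right: "O_ideal I \<Longrightarrow> J \<subseteq> ideal_add I J"
  unfolding ideal_add_def by (force dest: O_idealD(2))

lemma ideal_add_principal:
  assumes "O_ideal I" "x \<in> \<O>" "x \<notin> I"
  shows "O_ideal (ideal_add I (principal x))" "I \<subset> ideal_add I (principal x)"
    "x \<in> ideal_add I (principal x)"
proof -
  show "O_ideal (ideal_add I (principal x))"
    by (rule O_ideal_ideal_add[OF assms(1) O_ideal_principal[OF assms(2)]])
  show x: "x \<in> ideal_add I (principal x)"
    using ideal_add_right[OF assms(1)] principal_self by blast
  show "I \<subset> ideal_add I (principal x)"
    using ideal_add_left[OF O_ideal_principal[OF assms(2)]] x assms(3) by blast
qed

end

section \<open>Finiteness of the residue rings \<open>\<O>/m\<O>\<close>\<close>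

lemma int_relation_if_rat_relation:
  fixes u :: "complex \<Rightarrow> rat"
  assumes X: "finite X" and nonzero: "v0 \<in> X" "u v0 \<noteq> 0"
    and rel: "(\<Sum>v\<in>X. of_rat (u v) * v) = 0"
  shows "\<exists>c::complex \<Rightarrow> int. (\<exists>v\<in>X. c v \<noteq> 0) \<and> (\<Sum>v\<in>X. of_int (c v) * v) = 0"
proof -
  define num where "num v = fst (quotient_of (u v))" for v
  define den where "den v = snd (quotient_of (u v))" for v
  have den_pos: "den v > 0" for v unfolding den_def by (rule quotient_of_denom_pos')
  have u_eq: "u v = of_int (num v) / of_int (den v)" for v
    unfolding num_def den_def by (rule quotient_of_div) simp
  define D where "D = (\<Prod>w\<in>X. den w)"
  define c where "c v = num v * (\<Prod>w\<in>X - {v}. den w)" for v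
  have D_pos: "D > 0" unfolding D_def by (rule prod_pos) (use den_pos in auto)
  have c_eq: "of_int (c v) = of_int D * u v" if "v \<in> X" for v
  proof -
    have "D = den v * (\<Prod>w\<in>X - {v}. den w)"
      unfolding D_def using X that by (rule prod.remove)
    then have "of_int D * u v
        = of_int (den v * (\<Prod>w\<in>X - {v}. den w)) * (of_int (num v) / of_int (den v))"
      by (simp add: u_eq)
    also have "\<dots> = of_int (num v * (\<Prod>w\<in>X - {v}. den w))"
      using den_pos[of v] by (simp add: field_simps)
    finally show ?thesis by (simp add: c_def)
  qed
  have "(\<Sum>v\<in>X. of_int (c v) * v) = (\<Sum>v\<in>X. of_rat (of_int D) * (of_rat (u v) * v))"
  proof (rule sum.cong[OF refl])
    fix v assume "v \<in> X"
    have "(of_int (c v) :: complex) = of_rat (of_int (c v))" by simp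
    also have "\<dots> = of_rat (of_int D * u v)" using c_eq[OF \<open>v \<in> X\<close>] by simp
    finally show "of_int (c v) * v = of_rat (of_int D) * (of_rat (u v) * v)"
      by (simp add: of_rat_mult)
  qed
  also have "\<dots> = of_rat (of_int D) * (\<Sum>v\<in>X. of_rat (u v) * v)"
    by (simp add: sum_distrib_left)
  finally have "(\<Sum>v\<in>X. of_int (c v) * v) = 0" using rel by simp
  moreover have "c v0 \<noteq> 0"
  proof
    assume "c v0 = 0"
    then have "of_int D * u v0 = 0" using c_eq[OF nonzero(1)] by simp
    then show False using nonzero(2) D_pos by simp
  qed
  ultimately show ?thesis using nonzero(1) by blast
qed

lemma int_relation_not_all_dvd:
  fixes l :: int
  assumes l: "l > 1" and X: "finite X"
  shows "(\<exists>v\<in>X. c v \<noteq> 0) \<Longrightarrow> (\<Sum>v\<in>X. of_int (c v) * v) = (0 :: complex) \<Longrightarrow>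
     \<exists>c'::complex \<Rightarrow> int. (\<exists>v\<in>X. \<not> l dvd c' v) \<and> (\<Sum>v\<in>X. of_int (c' v) * v) = 0"
proof (induction "\<Sum>v\<in>X. nat \<bar>c v\<bar>" arbitrary: c rule: less_induct)
  case less
  show ?case
  proof (cases "\<forall>v\<in>X. l dvd c v")
    case False
    then show ?thesis using less.prems(2) by blast
  next
    case True
    define c' where "c' v = c v div l" for v
    have cc: "c v = l * c' v" if "v \<in> X" for v using True that by (simp add: c'_def)
    have "of_int l * (\<Sum>v\<in>X. of_int (c' v) * v) = (\<Sum>v\<in>X. of_int (c v) * (v::complex))"
      by (simp add: sum_distrib_left cc mult.assoc)
    then have rel': "(\<Sum>v\<in>X. of_int (c' v) * v) = 0" using less.prems(2) l by simp
    obtain v0 where v0: "v0 \<in> X" "c v0 \<noteq> 0" using less.prems(1) by blast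
    have nonzero': "c' v0 \<noteq> 0" using cc[OF v0(1)] v0(2) by auto
    have abs_c: "\<bar>c v\<bar> = l * \<bar>c' v\<bar>" if "v \<in> X" for v
      using cc[OF that] l by (simp add: abs_mult)
    have le: "nat \<bar>c' v\<bar> \<le> nat \<bar>c v\<bar>" if "v \<in> X" for v
    proof -
      have "1 * \<bar>c' v\<bar> \<le> l * \<bar>c' v\<bar>" using l by (intro mult_right_mono) auto
      then show ?thesis using abs_c[OF that] by simp
    qed
    have lt: "nat \<bar>c' v0\<bar> < nat \<bar>c v0\<bar>"
    proof -
      have "1 * \<bar>c' v0\<bar> < l * \<bar>c' v0\<bar>" using l nonzero' by (intro mult_strict_right_mono) auto
      then show ?thesis using abs_c[OF v0(1)] by simp
    qed
    have "(\<Sum>v\<in>X. nat \<bar>c' v\<bar>) < (\<Sum>v\<in>X. nat \<bar>c v\<bar>)"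
      by (rule sum_strict_mono_ex1[OF X]) (use le lt v0(1) in auto)
    from less.hyps[OF this] nonzero' v0(1) rel' show ?thesis by blast
  qed
qed

context numfield
begin

lemma rat_dependent_if_card_large:
  obtains n where "\<And>X. finite X \<Longrightarrow> X \<subseteq> F \<Longrightarrow> card X > n \<Longrightarrow>
     \<exists>u::complex \<Rightarrow> rat. (\<exists>v\<in>X. u v \<noteq> 0) \<and> (\<Sum>v\<in>X. of_rat (u v) * v) = 0"
proof -
  interpret Q: vector_space "\<lambda>(r::rat) (x::complex). of_rat r * x"
    by unfold_locales (auto simp: algebra_simps of_rat_add of_rat_mult)
  obtain B where B: "finite B" "B \<subseteq> F"
    "\<And>x. x \<in> F \<Longrightarrow> \<exists>c :: complex \<Rightarrow> rat. x = (\<Sum>b\<in>B. of_rat (c b) * b)"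
    using number_field unfolding number_field_def by blast
  have F_span: "F \<subseteq> Q.span B"
  proof
    fix x assume "x \<in> F"
    then obtain c where "x = (\<Sum>b\<in>B. of_rat (c b) * b)" using B(3) by blast
    then show "x \<in> Q.span B" unfolding Q.span_explicit using B(1) by blast
  qed
  show ?thesis
  proof (rule that[of "card B"])
    fix X :: "complex set" assume X: "finite X" "X \<subseteq> F" "card X > card B"
    have "Q.dependent X"
    proof (rule ccontr)
      assume "\<not> Q.dependent X"
      then have "card X \<le> card B"
        using Q.independent_span_bound[OF B(1), of X] X(2) F_span by blast
      then show False using X(3) by simp
    qed
    then show "\<exists>u::complex \<Rightarrow> rat. (\<exists>v\<in>X. u v \<noteq> 0) \<and> (\<Sum>v\<in>X. of_rat (u v) * v) = 0"
      using Q.dependent_finite[OF X(1)] by simp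
  qed
qed

text \<open>Linear independence over \<open>\<int>/l\<close> of the images in \<open>\<O>/l\<O>\<close>.\<close>
definition independent_mod :: "int \<Rightarrow> complex set \<Rightarrow> bool" where
  "independent_mod l X \<longleftrightarrow> finite X \<and> X \<subseteq> \<O> \<and>
     (\<forall>c::complex \<Rightarrow> int. (\<Sum>v\<in>X. of_int (c v) * v) / of_int l \<in> \<O> \<longrightarrow> (\<forall>v\<in>X. l dvd c v))"

definition finite_residue_system :: "int \<Rightarrow> complex set \<Rightarrow> bool" where
  "finite_residue_system m S \<longleftrightarrow> finite S \<and> S \<subseteq> \<O> \<and> (\<forall>y\<in>\<O>. \<exists>s\<in>S. (y - s) / of_int m \<in> \<O>)"

lemma independent_mod_card_bound:
  assumes l: "l > 1"
  obtains n where "\<And>X. independent_mod l X \<Longrightarrow> card X \<le> n"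
proof -
  obtain n where n: "\<And>X. finite X \<Longrightarrow> X \<subseteq> F \<Longrightarrow> card X > n \<Longrightarrow>
     \<exists>u::complex \<Rightarrow> rat. (\<exists>v\<in>X. u v \<noteq> 0) \<and> (\<Sum>v\<in>X. of_rat (u v) * v) = 0"
    using rat_dependent_if_card_large by blast
  show ?thesis
  proof (rule that[of n], rule ccontr)
    fix X assume X: "independent_mod l X" and "\<not> card X \<le> n"
    then have fin: "finite X" and "X \<subseteq> F" "card X > n" by (auto simp: independent_mod_def)
    from n[OF this] obtain u :: "complex \<Rightarrow> rat"
      where u: "\<exists>v\<in>X. u v \<noteq> 0" "(\<Sum>v\<in>X. of_rat (u v) * v) = 0"
      by blast
    then obtain v0 where "v0 \<in> X" "u v0 \<noteq> 0" by blast
    from int_relation_if_rat_relation[OF fin this u(2)] obtain c :: "complex \<Rightarrow> int"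
      where "\<exists>v\<in>X. c v \<noteq> 0" "(\<Sum>v\<in>X. of_int (c v) * v) = 0" by blast
    from int_relation_not_all_dvd[OF l fin this] obtain c' :: "complex \<Rightarrow> int"
      where c': "\<exists>v\<in>X. \<not> l dvd c' v" "(\<Sum>v\<in>X. of_int (c' v) * v) = 0" by blast
    have "(\<Sum>v\<in>X. of_int (c' v) * v) / of_int l \<in> \<O>" using c'(2) by simp
    then have "\<forall>v\<in>X. l dvd c' v" using X unfolding independent_mod_def by blast
    then show False using c'(1) by blast
  qed
qed

lemma int_combination_in_O:
  "X \<subseteq> \<O> \<Longrightarrow> (\<Sum>v\<in>X. of_int (e v) * v) \<in> \<O>"
  by (intro O_sum O_mult) auto

text \<open>Primality of \<open>l\<close> enters through Bezout: the new coefficient \<open>c y\<close> is invertible mod \<open>l\<close>.\<close>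
lemma spans_mod_if_maximal_independent:
  assumes l: "prime l" and X: "independent_mod l X"
    and maximal: "\<And>Y. independent_mod l Y \<Longrightarrow> card Y \<le> card X" and y: "y \<in> \<O>"
  shows "\<exists>e::complex \<Rightarrow> int. (y - (\<Sum>v\<in>X. of_int (e v) * v)) / of_int l \<in> \<O>"
proof (cases "y \<in> X")
  case True
  have "(\<Sum>v\<in>X. of_int (if v = y then 1 else 0) * v) = y"
    using X True by (simp add: independent_mod_def if_distrib[of "\<lambda>z. of_int z * _"] sum.delta'
        cong: if_cong)
  then show ?thesis by (intro exI[of _ "\<lambda>v. if v = y then 1 else 0"]) simp
next
  case False
  have fin: "finite X" and X_O: "X \<subseteq> \<O>" using X by (auto simp: independent_mod_def)
  have l_nonzero: "(of_int l :: complex) \<noteq> 0" using l by auto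
  have "card (insert y X) = Suc (card X)" using fin False by simp
  then have "\<not> independent_mod l (insert y X)" using maximal[of "insert y X"] by auto
  then obtain c :: "complex \<Rightarrow> int" where
    c: "(\<Sum>v\<in>insert y X. of_int (c v) * v) / of_int l \<in> \<O>" "\<exists>v\<in>insert y X. \<not> l dvd c v"
    using fin X_O y unfolding independent_mod_def by blast
  have sum_insert: "(\<Sum>v\<in>insert y X. of_int (c v) * v) = of_int (c y) * y + (\<Sum>v\<in>X. of_int (c v) * v)"
    using fin False by simp
  have "\<not> l dvd c y"
  proof
    assume "l dvd c y"
    then obtain k where k: "c y = l * k" by blast
    have "(\<Sum>v\<in>X. of_int (c v) * v) / of_int l =
        (\<Sum>v\<in>insert y X. of_int (c v) * v) / of_int l - of_int k * y"
      using l_nonzero unfolding sum_insert k by (simp add: field_simps)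
    also have "\<dots> \<in> \<O>" using c(1) y by (intro O_diff O_mult) auto
    finally have "\<forall>v\<in>X. l dvd c v" using X unfolding independent_mod_def by blast
    then show False using c(2) \<open>l dvd c y\<close> by blast
  qed
  then have "coprime l (c y)" using l by (intro prime_imp_coprime)
  then have "gcd (c y) l = 1" by (simp add: coprime_imp_gcd_eq_1 gcd.commute)
  moreover obtain u w where "u * c y + w * l = gcd (c y) l" using bezout_int by blast
  ultimately have uw: "u * c y + w * l = 1" by simp
  define e where "e v = - u * c v" for v
  have "y - (\<Sum>v\<in>X. of_int (e v) * v) = y + of_int u * (\<Sum>v\<in>X. of_int (c v) * v)"
    by (simp add: e_def sum_distrib_left sum_negf mult.assoc)
  also have "\<dots> = of_int (u * c y + w * l) * y - of_int (u * c y) * y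
      + of_int u * (\<Sum>v\<in>insert y X. of_int (c v) * v)"
    unfolding uw sum_insert by (simp add: algebra_simps)
  also have "\<dots> = of_int l * (of_int w * y + of_int u * ((\<Sum>v\<in>insert y X. of_int (c v) * v) / of_int l))"
    using l_nonzero by (simp add: field_simps)
  finally have "(y - (\<Sum>v\<in>X. of_int (e v) * v)) / of_int l =
      of_int w * y + of_int u * ((\<Sum>v\<in>insert y X. of_int (c v) * v) / of_int l)"
    using l_nonzero by simp
  also have "\<dots> \<in> \<O>" using c(1) y by (intro O_add O_mult) auto
  finally show ?thesis by blast
qed

lemma finite_residue_system_prime:
  assumes l: "prime l"
  shows "\<exists>S. finite_residue_system l S"
proof -
  have l1: "l > 1" using l by (rule prime_gt_1_int)
  have l_nonzero: "(of_int l :: complex) \<noteq> 0" using l1 by simp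
  obtain n where n: "\<And>X. independent_mod l X \<Longrightarrow> card X \<le> n"
    using independent_mod_card_bound[OF l1] by blast
  have "independent_mod l {}" by (simp add: independent_mod_def)
  then obtain X where X: "independent_mod l X"
    and maximal: "\<And>Y. independent_mod l Y \<Longrightarrow> card Y \<le> card X"
    using ex_has_greatest_nat[of "independent_mod l" "{}" card "Suc n"] n
    by (metis less_Suc_eq_le)
  have fin: "finite X" and X_O: "X \<subseteq> \<O>" using X by (auto simp: independent_mod_def)
  define S where "S = (\<lambda>d. \<Sum>v\<in>X. of_int (d v) * v) ` (PiE X (\<lambda>_. {0..<l}))"
  have "\<exists>s\<in>S. (y - s) / of_int l \<in> \<O>" if y: "y \<in> \<O>" for y
  proof -
    obtain e :: "complex \<Rightarrow> int" where e: "(y - (\<Sum>v\<in>X. of_int (e v) * v)) / of_int l \<in> \<O>"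
      using spans_mod_if_maximal_independent[OF l X maximal y] by blast
    define d where "d = restrict (\<lambda>v. e v mod l) X"
    have d: "d \<in> PiE X (\<lambda>_. {0..<l})" unfolding d_def using l1 by auto
    have "(\<Sum>v\<in>X. of_int (e v) * v) - (\<Sum>v\<in>X. of_int (d v) * v) =
          (\<Sum>v\<in>X. of_int l * (of_int (e v div l) * v))"
      unfolding sum_subtractf[symmetric]
    proof (rule sum.cong[OF refl])
      fix v assume "v \<in> X"
      have "e v = l * (e v div l) + e v mod l" by simp
      then have "(of_int (e v) :: complex) = of_int l * of_int (e v div l) + of_int (e v mod l)"
        by (metis of_int_add of_int_mult)
      then show "of_int (e v) * v - of_int (d v) * v = of_int l * (of_int (e v div l) * v)"
        using \<open>v \<in> X\<close> by (simp add: d_def algebra_simps)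
    qed
    then have "(y - (\<Sum>v\<in>X. of_int (d v) * v)) / of_int l =
        (y - (\<Sum>v\<in>X. of_int (e v) * v)) / of_int l + (\<Sum>v\<in>X. of_int (e v div l) * v)"
      using l_nonzero by (simp add: field_simps sum_distrib_left)
    also have "\<dots> \<in> \<O>" by (intro O_add e int_combination_in_O X_O)
    finally show ?thesis unfolding S_def using d by blast
  qed
  moreover have "finite S" unfolding S_def using fin by (intro finite_imageI finite_PiE) auto
  moreover have "S \<subseteq> \<O>" unfolding S_def using int_combination_in_O[OF X_O] by blast
  ultimately show ?thesis unfolding finite_residue_system_def by blast
qed

lemma finite_residue_system_mult:
  assumes S: "finite_residue_system m S" and T: "finite_residue_system n T"
    and nonzero: "m \<noteq> 0" "n \<noteq> 0"
  shows "finite_residue_system (m * n) ((\<lambda>(s, t). s + of_int m * t) ` (S \<times> T))"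
    (is "finite_residue_system _ ?ST")
proof -
  have "\<exists>u\<in>?ST. (y - u) / of_int (m * n) \<in> \<O>" if y: "y \<in> \<O>" for y
  proof -
    obtain s where s: "s \<in> S" "(y - s) / of_int m \<in> \<O>"
      using S y unfolding finite_residue_system_def by blast
    define z where "z = (y - s) / of_int m"
    obtain t where t: "t \<in> T" "(z - t) / of_int n \<in> \<O>"
      using T s(2) unfolding finite_residue_system_def z_def by blast
    have "(y - (s + of_int m * t)) / of_int (m * n) = (z - t) / of_int n"
      unfolding z_def using nonzero by (simp add: field_simps)
    moreover have "s + of_int m * t \<in> ?ST" using s(1) t(1) by force
    ultimately show ?thesis using t(2) by metis
  qed
  moreover have "finite ?ST" using S T unfolding finite_residue_system_def by simp
  moreover have "?ST \<subseteq> \<O>" using S T unfolding finite_residue_system_def by (auto intro!: O_add O_mult)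
  ultimately show ?thesis unfolding finite_residue_system_def by blast
qed

lemma finite_residue_system_exists:
  fixes m :: int
  assumes "m > 0"
  shows "\<exists>S. finite_residue_system m S"
  using assms
proof (induction "nat m" arbitrary: m rule: less_induct)
  case less
  show ?case
  proof (cases "m = 1")
    case True
    then show ?thesis unfolding finite_residue_system_def by (intro exI[of _ "{0}"]) auto
  next
    case False
    then have "nat m \<noteq> 1" using less.prems by simp
    then obtain q where q: "prime q" "q dvd nat m" using prime_factor_nat by blast
    then have q_prime: "prime (int q)" by simp
    have "int q dvd int (nat m)" using q(2) by (simp only: int_dvd_int_iff)
    then have "int q dvd m" using less.prems by simp
    then obtain m' where m': "m = m' * int q" by (metis dvdE mult.commute)
    have m'_pos: "m' > 0" using less.prems m' prime_gt_0_int[OF q_prime] by (simp add: zero_less_mult_iff)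
    have "nat m' < nat m" using m' m'_pos prime_gt_1_int[OF q_prime] by simp
    from less.hyps[OF this m'_pos] obtain S' where S': "finite_residue_system m' S'" by blast
    obtain Sq where Sq: "finite_residue_system (int q) Sq"
      using finite_residue_system_prime[OF q_prime] by blast
    have "finite_residue_system (m' * int q) ((\<lambda>(s, t). s + of_int m' * t) ` (S' \<times> Sq))"
      by (rule finite_residue_system_mult[OF S' Sq]) (use m'_pos prime_gt_0_int[OF q_prime] in simp_all)
    then show ?thesis unfolding m' by blast
  qed
qed

end

section \<open>Nonzero ideals are invertible\<close>

context numfield
begin

lemma ideal_contains_int_if_root:
  fixes p :: "int poly"
  assumes I: "O_ideal I" and x: "x \<in> I" "x \<noteq> 0"
  shows "p \<noteq> 0 \<Longrightarrow> poly (map_poly of_int p) x = 0 \<Longrightarrow> \<exists>m::int. m \<noteq> 0 \<and> of_int m \<in> I"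
proof (induction p rule: pCons_induct)
  case 0
  then show ?case by simp
next
  case (pCons a q)
  have x_O: "x \<in> \<O>" using I x O_idealD(1) by blast
  have "map_poly (of_int :: int \<Rightarrow> complex) (pCons a q) = pCons (of_int a) (map_poly of_int q)"
    by (intro poly_eqI) (simp add: coeff_map_poly coeff_pCons split: nat.splits)
  then have root: "of_int a + x * poly (map_poly of_int q) x = 0"
    using pCons.prems(2) by simp
  show ?case
  proof (cases "a = 0")
    case False
    have "(- poly (map_poly of_int q) x) * x \<in> I"
      using O_idealD(4)[OF I _ x(1)] x_O by blast
    moreover have "of_int a = - (x * poly (map_poly of_int q) x)"
      using root by (simp only: eq_neg_iff_add_eq_0)
    then have "(- poly (map_poly of_int q) x) * x = of_int a" by (simp add: mult.commute)
    ultimately show ?thesis using False by (intro exI[of _ a]) simp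
  next
    case True
    then have "q \<noteq> 0" "poly (map_poly of_int q) x = 0" using pCons.hyps root x(2) by simp_all
    then show ?thesis using pCons.IH by blast
  qed
qed

lemma ideal_contains_positive_int:
  assumes I: "O_ideal I" "I \<noteq> {0}"
  obtains m :: int where "m > 0" "of_int m \<in> I"
proof -
  obtain x where x: "x \<in> I" "x \<noteq> 0" using O_ideal_nonzero_elem[OF I] by blast
  then have "algebraic_int x" using O_idealD(1)[OF I(1)] by blast
  then obtain p where p: "poly (map_poly of_int p) x = 0" "lead_coeff p = (1::int)"
    unfolding algebraic_int_altdef_ipoly by blast
  then have "p \<noteq> 0" by auto
  then obtain m :: int where m: "m \<noteq> 0" "of_int m \<in> I"
    using ideal_contains_int_if_root[OF I(1) x _ p(1)] by blast
  show ?thesis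
  proof (cases "m > 0")
    case False
    have "(- 1) * of_int m \<in> I" using O_idealD(4)[OF I(1) _ m(2), of "- 1"] by auto
    then show ?thesis using False m(1) by (intro that[of "- m"]) simp_all
  qed (use m that in blast)
qed

lemma finite_residue_system_decompose:
  assumes "finite_residue_system m S" "m > 0" "x \<in> \<O>"
  obtains s z where "s \<in> S" "z \<in> \<O>" "x = s + z * of_int m"
proof -
  obtain s where s: "s \<in> S" "(x - s) / of_int m \<in> \<O>"
    using assms(1,3) unfolding finite_residue_system_def by blast
  have "x = s + (x - s) / of_int m * of_int m" using assms(2) by simp
  with s show ?thesis by (intro that) auto
qed

lemma ideal_residue_system:
  assumes I: "O_ideal I" "I \<noteq> {0}"
  obtains m :: int and S where "m > 0" "of_int m \<in> I" "finite_residue_system m S"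
proof -
  obtain m :: int where m: "m > 0" "of_int m \<in> I" by (rule ideal_contains_positive_int[OF I])
  moreover obtain S where "finite_residue_system m S" using finite_residue_system_exists[OF m(1)] ..
  ultimately show ?thesis by (rule that)
qed

lemma ideal_finitely_generated:
  assumes I: "O_ideal I" "I \<noteq> {0}"
  obtains G where "finite G" "G \<subseteq> I" "\<exists>g\<in>G. g \<noteq> 0"
    "\<And>x. x \<in> I \<Longrightarrow> \<exists>r. (\<forall>g\<in>G. r g \<in> \<O>) \<and> x = (\<Sum>g\<in>G. r g * g)"
proof -
  obtain m :: int and S where m: "m > 0" "of_int m \<in> I" and S: "finite_residue_system m S"
    using ideal_residue_system[OF I] by blast
  define G where "G = insert (of_int m) (S \<inter> I)"
  have fin: "finite G" using S by (simp add: G_def finite_residue_system_def)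
  have "\<exists>r. (\<forall>g\<in>G. r g \<in> \<O>) \<and> x = (\<Sum>g\<in>G. r g * g)" if x: "x \<in> I" for x
  proof -
    obtain s z where sz: "s \<in> S" "z \<in> \<O>" "x = s + z * of_int m"
      using finite_residue_system_decompose[OF S m(1)] x O_idealD(1)[OF I(1)] by blast
    have "z * of_int m \<in> I" using O_idealD(4)[OF I(1) sz(2) m(2)] .
    then have "s \<in> I" using O_ideal_diff[OF I(1) x] sz(3) by (metis add_diff_cancel_right')
    then have s_G: "s \<in> G" using sz(1) by (simp add: G_def)
    have m_G: "of_int m \<in> G" by (simp add: G_def)
    define r where "r g = (if g = s then 1 else 0) + (if g = of_int m then z else 0)" for g
    have "(\<Sum>g\<in>G. r g * g)
        = (\<Sum>g\<in>G. (if g = s then g else 0)) + (\<Sum>g\<in>G. (if g = of_int m then z * g else 0))"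
      unfolding sum.distrib[symmetric] by (rule sum.cong) (auto simp: r_def distrib_right)
    also have "\<dots> = x" using fin s_G m_G sz(3) by (simp add: sum.delta')
    finally show ?thesis using sz(2) by (intro exI[of _ r]) (auto simp: r_def)
  qed
  moreover have "G \<subseteq> I" "\<exists>g\<in>G. g \<noteq> 0" using m by (auto simp: G_def)
  ultimately show ?thesis using fin that by blast
qed

text \<open>An ideal containing \<open>I \<ni> m\<close> is determined by which representatives of \<open>\<O>/m\<O>\<close> it contains.\<close>
lemma finite_ideals_above:
  assumes I: "O_ideal I" "I \<noteq> {0}"
  shows "finite {J. O_ideal J \<and> I \<subseteq> J}"
proof -
  obtain m :: int and S where m: "m > 0" "of_int m \<in> I" and S: "finite_residue_system m S"
    using ideal_residue_system[OF I] by blast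
  have subset: "J1 \<subseteq> J2"
    if J: "O_ideal J1" "I \<subseteq> J1" "O_ideal J2" "I \<subseteq> J2" "J1 \<inter> S = J2 \<inter> S" for J1 J2
  proof
    fix x assume x: "x \<in> J1"
    obtain s z where sz: "s \<in> S" "z \<in> \<O>" "x = s + z * of_int m"
      using finite_residue_system_decompose[OF S m(1)] x O_idealD(1)[OF J(1)] by blast
    have mz: "z * of_int m \<in> J1" "z * of_int m \<in> J2"
      using O_idealD(4)[OF J(1) sz(2)] O_idealD(4)[OF J(3) sz(2)] J(2,4) m(2) by blast+
    have "s \<in> J1" using O_ideal_diff[OF J(1) x mz(1)] sz(3) by (metis add_diff_cancel_right')
    then have "s \<in> J2" using sz(1) J(5) by blast
    then show "x \<in> J2" using sz(3) O_idealD(3)[OF J(3) _ mz(2)] by simp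
  qed
  have "inj_on (\<lambda>J. J \<inter> S) {J. O_ideal J \<and> I \<subseteq> J}"
    by (rule inj_onI) (use subset in blast)
  moreover have "(\<lambda>J. J \<inter> S) ` {J. O_ideal J \<and> I \<subseteq> J} \<subseteq> Pow S" by auto
  ultimately show ?thesis using S unfolding finite_residue_system_def
    by (meson finite_Pow_iff finite_imageD finite_subset)
qed

lemma O_if_stabilises_ideal:
  assumes I: "O_ideal I" "I \<noteq> {0}" and y: "y \<in> F" and stable: "\<And>x. x \<in> I \<Longrightarrow> y * x \<in> I"
  shows "y \<in> \<O>"
proof -
  obtain G where G: "finite G" "G \<subseteq> I" "\<exists>g\<in>G. g \<noteq> 0"
    "\<And>x. x \<in> I \<Longrightarrow> \<exists>r. (\<forall>g\<in>G. r g \<in> \<O>) \<and> x = (\<Sum>g\<in>G. r g * g)"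
    using ideal_finitely_generated[OF I] by blast
  have "algebraic_int y"
  proof (rule algebraic_int_if_stable_span[OF G(1) G(3)])
    fix w assume "w \<in> G"
    then have "y * w \<in> I" using stable G(2) by blast
    then obtain r where "\<forall>g\<in>G. r g \<in> \<O>" "y * w = (\<Sum>g\<in>G. r g * g)" using G(4) by blast
    then show "\<exists>f. (\<forall>w'\<in>G. algebraic_int (f w')) \<and> y * w = (\<Sum>w'\<in>G. f w' * w')"
      by (intro exI[of _ r]) auto
  qed
  then show ?thesis using y by (simp add: O_iff)
qed

text \<open>Pigeonhole in the finite ring \<open>\<O>/m\<O>\<close>.\<close>
lemma powers_congruent_mod:
  assumes "x \<in> \<O>" "m > 0"
  obtains a b where "a < b" "(x ^ a - x ^ b) / of_int m \<in> \<O>"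
proof -
  obtain S where S: "finite_residue_system m S" using finite_residue_system_exists[OF assms(2)] by blast
  define f where "f k = (SOME s. s \<in> S \<and> (x ^ k - s) / of_int m \<in> \<O>)" for k :: nat
  have f: "f k \<in> S \<and> (x ^ k - f k) / of_int m \<in> \<O>" for k
    unfolding f_def by (rule someI_ex) (use S assms(1) in \<open>auto simp: finite_residue_system_def\<close>)
  have "\<not> inj_on f {0..card S}"
  proof
    assume "inj_on f {0..card S}"
    then have "card (f ` {0..card S}) = card {0..card S}" by (rule card_image)
    moreover have "card (f ` {0..card S}) \<le> card S"
      using f S by (intro card_mono) (auto simp: finite_residue_system_def)
    ultimately show False by simp
  qed
  then obtain i j where "i \<noteq> j" "f i = f j" unfolding inj_on_def by blast
  then obtain a b where ab: "a < b" "f a = f b" by (metis linorder_neqE_nat)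
  have "(x ^ a - x ^ b) / of_int m = (x ^ a - f a) / of_int m - (x ^ b - f b) / of_int m"
    using ab(2) by (simp add: diff_divide_distrib)
  also have "\<dots> \<in> \<O>" using f[of a] f[of b] by (intro O_diff) auto
  finally show ?thesis using ab(1) that by blast
qed

lemma prime_ideal_power_notin:
  assumes P: "prime_ideal F P" and x: "x \<in> \<O>" "x \<notin> P"
  shows "x ^ k \<notin> P"
proof (induction k)
  case 0
  then show ?case using O_ideal_eq_O_iff_one[OF prime_idealD(1)[OF P]] prime_idealD(3)[OF P] by simp
next
  case (Suc k)
  then show ?case using prime_idealD(4)[OF P x(1), of "x ^ k"] x by auto
qed

lemma prime_ideal_unit_mod:
  assumes P: "prime_ideal F P" and x: "x \<in> \<O>" "x \<notin> P"
  obtains r where "r \<in> \<O>" "1 - x * r \<in> P"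
proof -
  obtain m :: int where m: "m > 0" "of_int m \<in> P"
    by (rule ideal_contains_positive_int[OF prime_idealD(1,2)[OF P]])
  obtain a b where ab: "a < b" "(x ^ a - x ^ b) / of_int m \<in> \<O>"
    using powers_congruent_mod[OF x(1) m(1)] by blast
  obtain k where b: "b = Suc (a + k)" using less_imp_Suc_add[OF ab(1)] by blast
  have "x ^ a * (1 - x * x ^ k) = x ^ a - x ^ b" by (simp add: b power_add algebra_simps)
  also have "\<dots> = (x ^ a - x ^ b) / of_int m * of_int m" using m(1) by simp
  also have "\<dots> \<in> P" using O_idealD(4)[OF prime_idealD(1)[OF P] ab(2) m(2)] .
  finally have "x ^ a * (1 - x * x ^ k) \<in> P" .
  moreover have "x ^ a \<in> \<O>" "1 - x * x ^ k \<in> \<O>" using x(1) by auto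
  ultimately have "1 - x * x ^ k \<in> P"
    using prime_idealD(4)[OF P] prime_ideal_power_notin[OF P x, of a] by blast
  then show ?thesis using x(1) by (intro that) auto
qed

lemma prime_ideal_maximal:
  assumes P: "prime_ideal F P" and J: "O_ideal J" "P \<subseteq> J"
  shows "J = P \<or> J = \<O>"
proof (rule ccontr)
  assume "\<not> (J = P \<or> J = \<O>)"
  then obtain x where x: "x \<in> J" "x \<notin> P" using J(2) by blast
  have x_O: "x \<in> \<O>" using x(1) O_idealD(1)[OF J(1)] by blast
  obtain r where r: "r \<in> \<O>" "1 - x * r \<in> P" using prime_ideal_unit_mod[OF P x_O x(2)] by blast
  have "1 = (1 - x * r) + x * r" by simp
  also have "\<dots> \<in> J" using J r x(1) O_idealD(3)[OF J(1)] O_ideal_mult_right[OF J(1)] by blast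
  finally have "J = \<O>" using O_ideal_eq_O_iff_one[OF J(1)] by simp
  then show False using \<open>\<not> (J = P \<or> J = \<O>)\<close> by blast
qed

definition ideals_above :: "complex set \<Rightarrow> complex set set" where
  "ideals_above I = {J. O_ideal J \<and> I \<subseteq> J}"

lemma card_ideals_above_less:
  assumes I: "O_ideal I" "I \<noteq> {0}" and J: "O_ideal J" "I \<subset> J"
  shows "card (ideals_above J) < card (ideals_above I)"
proof (rule psubset_card_mono)
  show "finite (ideals_above I)" using finite_ideals_above[OF I] by (simp add: ideals_above_def)
  have "I \<in> ideals_above I" "I \<notin> ideals_above J" using I J(2) by (auto simp: ideals_above_def)
  then show "ideals_above J \<subset> ideals_above I" using J(2) by (auto simp: ideals_above_def)
qed

definition ideal_prod :: "complex set list \<Rightarrow> complex set" where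
  "ideal_prod Ps = foldr ideal_mult Ps \<O>"

lemma ideal_prod_Nil[simp]: "ideal_prod [] = \<O>"
  and ideal_prod_Cons[simp]: "ideal_prod (P # Ps) = ideal_mult P (ideal_prod Ps)"
  by (simp_all add: ideal_prod_def)

lemma O_ideal_ideal_prod: "(\<And>P. P \<in> set Ps \<Longrightarrow> O_ideal P) \<Longrightarrow> O_ideal (ideal_prod Ps)"
  by (induction Ps) (auto intro: O_ideal_O O_ideal_ideal_mult)

lemma ideal_prod_append:
  "(\<And>P. P \<in> set (xs @ ys) \<Longrightarrow> O_ideal P) \<Longrightarrow>
    ideal_prod (xs @ ys) = ideal_mult (ideal_prod xs) (ideal_prod ys)"
proof (induction xs)
  case Nil
  have "O_ideal (ideal_prod ys)" using Nil by (intro O_ideal_ideal_prod) auto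
  then show ?case by (simp add: ideal_mult_O_left O_ideal_imp_O_module)
next
  case (Cons P xs)
  then show ?case by (simp add: ideal_mult_assoc)
qed

lemma ideal_prod_remove1: "Q \<in> set Ps \<Longrightarrow> ideal_prod Ps = ideal_mult Q (ideal_prod (remove1 Q Ps))"
  by (induction Ps) (auto simp: ideal_mult_left_commute)

lemma ideal_mult_ideal_add_principal_subset:
  assumes I: "O_ideal I" and xy: "x \<in> \<O>" "y \<in> \<O>" "x * y \<in> I"
  shows "ideal_mult (ideal_add I (principal x)) (ideal_add I (principal y)) \<subseteq> I"
proof (rule ideal_mult_least)
  show "0 \<in> I" "\<And>a b. a \<in> I \<Longrightarrow> b \<in> I \<Longrightarrow> a + b \<in> I" using O_idealD(2,3)[OF I] by blast+
  fix u v assume "u \<in> ideal_add I (principal x)" "v \<in> ideal_add I (principal y)"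
  then obtain a r b s where ab: "a \<in> I" "r \<in> \<O>" "u = a + x * r" "b \<in> I" "s \<in> \<O>" "v = b + y * s"
    unfolding ideal_add_def principal_def by blast
  have "u * v = a * (b + y * s) + b * (x * r) + (x * y) * (r * s)"
    using ab(3,6) by (simp add: algebra_simps)
  moreover have "b + y * s \<in> \<O>" "x * r \<in> \<O>" "r * s \<in> \<O>"
    using ab O_idealD(1)[OF I] xy by auto
  then have "a * (b + y * s) \<in> I" "b * (x * r) \<in> I" "(x * y) * (r * s) \<in> I"
    using O_ideal_mult_right[OF I] ab(1,4) xy(3) by blast+
  ultimately show "u * v \<in> I" using O_idealD(3)[OF I] by metis
qed

lemma ideal_contains_prime_product:
  assumes "O_ideal I" "I \<noteq> {0}"
  shows "\<exists>Ps. (\<forall>P\<in>set Ps. prime_ideal F P) \<and> ideal_prod Ps \<subseteq> I"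
  using assms
proof (induction "card (ideals_above I)" arbitrary: I rule: less_induct)
  case less
  note I = less.prems
  consider "I = \<O>" | "prime_ideal F I"
    | x y where "x \<in> \<O>" "y \<in> \<O>" "x * y \<in> I" "x \<notin> I" "y \<notin> I"
    using I unfolding prime_ideal_def integral_ideal_iff by blast
  then show ?case
  proof cases
    case 1
    then show ?thesis by (intro exI[of _ "[]"]) simp
  next
    case 2
    then show ?thesis using I
      by (intro exI[of _ "[I]"]) (simp add: ideal_mult_O_right O_ideal_imp_O_module)
  next
    case 3
    let ?Ix = "ideal_add I (principal x)" and ?Iy = "ideal_add I (principal y)"
    have Ix: "O_ideal ?Ix" "I \<subset> ?Ix" and Iy: "O_ideal ?Iy" "I \<subset> ?Iy"
      using ideal_add_principal[OF I(1)] 3 by blast+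
    obtain Px where Px: "\<forall>P\<in>set Px. prime_ideal F P" "ideal_prod Px \<subseteq> ?Ix"
      using less.hyps[OF card_ideals_above_less[OF I Ix] Ix(1)]
        O_ideal_nonzero_mono[OF I] Ix(2) by blast
    obtain Py where Py: "\<forall>P\<in>set Py. prime_ideal F P" "ideal_prod Py \<subseteq> ?Iy"
      using less.hyps[OF card_ideals_above_less[OF I Iy] Iy(1)]
        O_ideal_nonzero_mono[OF I] Iy(2) by blast
    have "ideal_prod (Px @ Py) = ideal_mult (ideal_prod Px) (ideal_prod Py)"
      using Px(1) Py(1) by (intro ideal_prod_append) (auto dest: prime_idealD(1))
    also have "\<dots> \<subseteq> ideal_mult ?Ix ?Iy" by (rule ideal_mult_mono[OF Px(2) Py(2)])
    also have "\<dots> \<subseteq> I" by (rule ideal_mult_ideal_add_principal_subset[OF I(1) 3(1-3)])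
    finally show ?thesis using Px(1) Py(1) by (intro exI[of _ "Px @ Py"]) auto
  qed
qed

lemma prime_ideal_contains_factor:
  assumes P: "prime_ideal F P"
  shows "(\<And>Q. Q \<in> set Qs \<Longrightarrow> O_ideal Q) \<Longrightarrow> ideal_prod Qs \<subseteq> P \<Longrightarrow> \<exists>Q\<in>set Qs. Q \<subseteq> P"
proof (induction Qs)
  case Nil
  then show ?case using prime_idealD(1,3)[OF P] O_idealD(1) by auto
next
  case (Cons Q Qs)
  show ?case
  proof (cases "Q \<subseteq> P")
    case False
    then obtain q where q: "q \<in> Q" "q \<notin> P" by blast
    have "ideal_prod Qs \<subseteq> P"
    proof
      fix r assume r: "r \<in> ideal_prod Qs"
      have "q * r \<in> P" using Cons.prems(2) mult_in_ideal_mult[OF q(1) r] by auto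
      moreover have "q \<in> \<O>" "r \<in> \<O>"
        using q(1) r O_ideal_ideal_prod[of Qs] Cons.prems(1) O_idealD(1) by auto
      ultimately show "r \<in> P" using prime_idealD(4)[OF P] q(2) by blast
    qed
    then show ?thesis using Cons by auto
  qed simp
qed

definition ideal_inv :: "complex set \<Rightarrow> complex set" where
  "ideal_inv I = {x \<in> F. \<forall>i\<in>I. x * i \<in> \<O>}"

lemma O_module_ideal_inv: "O_module (ideal_inv I)"
  by (rule O_moduleI) (auto simp: ideal_inv_def distrib_right mult.assoc)

lemma O_subset_ideal_inv: "O_ideal I \<Longrightarrow> \<O> \<subseteq> ideal_inv I"
  by (auto simp: ideal_inv_def dest: O_idealD(1))

lemma ideal_mult_ideal_inv_subset: "ideal_mult I (ideal_inv I) \<subseteq> \<O>"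
  by (rule ideal_mult_least) (auto simp: ideal_inv_def mult.commute)

lemma divide_in_ideal_inv:
  assumes a: "a \<in> \<O>" "a \<noteq> 0" and b: "b \<in> \<O>" and Pb: "\<And>p. p \<in> P \<Longrightarrow> p * b \<in> principal a"
  shows "b / a \<in> ideal_inv P"
  unfolding ideal_inv_def
proof (intro CollectI conjI ballI)
  show "b / a \<in> F" using a b by blast
  fix p assume "p \<in> P"
  then obtain r where r: "r \<in> \<O>" "p * b = a * r" using Pb unfolding principal_def by blast
  have "b / a * p = r" using r(2) a(2) by (simp add: field_simps)
  then show "b / a * p \<in> \<O>" using r(1) by simp
qed

text \<open>Take a product of primes \<open>P\<^sub>1\<cdots>P\<^sub>n \<subseteq> a\<O> \<subseteq> P\<close> of minimal length; one factor is \<open>P\<close>,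
  and an element \<open>b\<close> of the product of the others outside \<open>a\<O>\<close> gives \<open>b/a\<close>.\<close>
lemma ideal_inv_prime_not_subset_O:
  assumes P: "prime_ideal F P"
  obtains y where "y \<in> ideal_inv P" "y \<notin> \<O>"
proof -
  obtain a where a: "a \<in> P" "a \<noteq> 0" using O_ideal_nonzero_elem prime_idealD(1,2)[OF P] by blast
  have a_O: "a \<in> \<O>" using a(1) O_idealD(1)[OF prime_idealD(1)[OF P]] by blast
  have "principal a \<noteq> {0}" using principal_self[of a] a(2) by blast
  then obtain Ps0 where "\<forall>Q\<in>set Ps0. prime_ideal F Q" "ideal_prod Ps0 \<subseteq> principal a"
    using ideal_contains_prime_product[OF O_ideal_principal[OF a_O]] by blast
  then obtain Ps where Ps: "\<forall>Q\<in>set Ps. prime_ideal F Q" "ideal_prod Ps \<subseteq> principal a"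
    and minimal: "\<And>Qs. \<forall>Q\<in>set Qs. prime_ideal F Q \<Longrightarrow> ideal_prod Qs \<subseteq> principal a \<Longrightarrow>
      length Ps \<le> length Qs"
    using ex_has_least_nat[of "\<lambda>Qs. (\<forall>Q\<in>set Qs. prime_ideal F Q) \<and> ideal_prod Qs \<subseteq> principal a"
        Ps0 length] by blast
  have "ideal_prod Ps \<subseteq> P" using Ps(2) principal_subset[OF prime_idealD(1)[OF P] a(1)] by blast
  then obtain Q where Q: "Q \<in> set Ps" "Q \<subseteq> P"
    using prime_ideal_contains_factor[OF P] Ps(1) prime_idealD(1) by blast
  have "prime_ideal F Q" using Ps(1) Q(1) by blast
  from prime_ideal_maximal[OF this prime_idealD(1)[OF P] Q(2)] have "P = Q"
    using prime_idealD(3)[OF P] by blast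
  with Q(1) have "P \<in> set Ps" by simp
  define R where "R = ideal_prod (remove1 P Ps)"
  have PR: "ideal_prod Ps = ideal_mult P R"
    using ideal_prod_remove1[OF \<open>P \<in> set Ps\<close>] unfolding R_def .
  have primes_R: "\<forall>Q\<in>set (remove1 P Ps). prime_ideal F Q" using Ps(1) set_remove1_subset[of P Ps] by blast
  have "\<not> R \<subseteq> principal a"
  proof
    assume "R \<subseteq> principal a"
    from minimal[OF primes_R this[unfolded R_def]] have "length Ps \<le> length (remove1 P Ps)" .
    moreover have "length (remove1 P Ps) < length Ps"
      using \<open>P \<in> set Ps\<close> length_pos_if_in_set[OF \<open>P \<in> set Ps\<close>] by (simp add: length_remove1)
    ultimately show False by simp
  qed
  then obtain b where b: "b \<in> R" "b \<notin> principal a" by blast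
  have "O_ideal R" unfolding R_def
    by (rule O_ideal_ideal_prod) (use primes_R prime_idealD(1) in blast)
  then have b_O: "b \<in> \<O>" using b(1) O_idealD(1) by blast
  have "p * b \<in> principal a" if "p \<in> P" for p
    using mult_in_ideal_mult[OF that b(1)] PR Ps(2) by blast
  then have "b / a \<in> ideal_inv P" by (rule divide_in_ideal_inv[OF a_O a(2) b_O])
  moreover have "b / a \<notin> \<O>"
  proof
    assume "b / a \<in> \<O>"
    then have "a * (b / a) \<in> principal a" by (rule principal_mem)
    then show False using b(2) a(2) by simp
  qed
  ultimately show ?thesis by (rule that)
qed

lemma ideal_mult_ideal_inv_prime:
  assumes P: "prime_ideal F P"
  shows "ideal_mult P (ideal_inv P) = \<O>"
proof -
  note P' = prime_idealD(1,2)[OF P]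
  define M where "M = ideal_mult P (ideal_inv P)"
  have M: "O_ideal M" unfolding M_def
    by (rule O_ideal_ideal_mult_if_subset[OF P'(1) O_module_ideal_inv ideal_mult_ideal_inv_subset])
  have "P \<subseteq> M"
  proof
    fix p assume "p \<in> P"
    moreover have "1 \<in> ideal_inv P" using O_subset_ideal_inv[OF P'(1)] by blast
    ultimately have "p * 1 \<in> M" unfolding M_def by (rule mult_in_ideal_mult)
    then show "p \<in> M" by simp
  qed
  moreover have "M \<noteq> P"
  proof
    assume MP: "M = P"
    obtain y where y: "y \<in> ideal_inv P" "y \<notin> \<O>" using ideal_inv_prime_not_subset_O[OF P] by blast
    have "y \<in> \<O>"
    proof (rule O_if_stabilises_ideal[OF P'])
      show "y \<in> F" using y(1) by (simp add: ideal_inv_def)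
      fix x assume "x \<in> P"
      then have "x * y \<in> M" unfolding M_def using y(1) by (rule mult_in_ideal_mult)
      then show "y * x \<in> P" using MP by (simp add: mult.commute)
    qed
    then show False using y(2) by blast
  qed
  ultimately show ?thesis using prime_ideal_maximal[OF P M] unfolding M_def by blast
qed

lemma exists_prime_ideal_above:
  assumes I: "O_ideal I" "I \<noteq> {0}" "I \<noteq> \<O>"
  obtains P where "prime_ideal F P" "I \<subseteq> P"
proof -
  define A where "A = {J. O_ideal J \<and> I \<subseteq> J \<and> J \<noteq> \<O>}"
  have "finite A" using finite_ideals_above[OF I(1,2)] unfolding A_def
    by (rule finite_subset[rotated]) auto
  moreover have "A \<noteq> {}" using I unfolding A_def by blast
  ultimately obtain P where "P \<in> A" and P_max: "\<And>J. J \<in> A \<Longrightarrow> P \<subseteq> J \<Longrightarrow> P = J"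
    using finite_has_maximal[of A] by blast
  then have P: "O_ideal P" "I \<subseteq> P" "P \<noteq> \<O>" by (auto simp: A_def)
  have "x \<in> P \<or> y \<in> P" if xy: "x \<in> \<O>" "y \<in> \<O>" "x * y \<in> P" for x y
  proof (cases "x \<in> P")
    case False
    let ?J = "ideal_add P (principal x)"
    have J: "O_ideal ?J" "P \<subset> ?J" using ideal_add_principal[OF P(1) xy(1) False] by blast+
    then have "?J = \<O>" using P_max[of ?J] P(2) unfolding A_def by blast
    then obtain p r where pr: "p \<in> P" "r \<in> \<O>" "1 = p + x * r"
      unfolding ideal_add_def principal_def using O_1 by blast
    have "y = y * (p + x * r)" using pr(3) by simp
    also have "\<dots> = p * y + (x * y) * r" by (simp add: algebra_simps)
    also have "\<dots> \<in> P"
      using O_idealD(3)[OF P(1)] O_ideal_mult_right[OF P(1)] pr(1,2) xy(2,3) by blast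
    finally show ?thesis by blast
  qed simp
  moreover have "P \<noteq> {0}" by (rule O_ideal_nonzero_mono[OF I(1,2) P(2)])
  ultimately have "prime_ideal F P"
    using P unfolding prime_ideal_def integral_ideal_iff by blast
  then show ?thesis using P(2) that by blast
qed

lemma ideal_mult_ideal_inv_prime_grows:
  assumes I: "O_ideal I" "I \<noteq> {0}" and P: "prime_ideal F P" "I \<subseteq> P"
  shows "O_ideal (ideal_mult I (ideal_inv P))" "I \<subset> ideal_mult I (ideal_inv P)"
proof -
  let ?I' = "ideal_mult I (ideal_inv P)"
  note P' = prime_idealD(1,3)[OF P(1)]
  have "?I' \<subseteq> ideal_mult P (ideal_inv P)" by (rule ideal_mult_mono[OF P(2) order.refl])
  then have "?I' \<subseteq> \<O>" using ideal_mult_ideal_inv_prime[OF P(1)] by simp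
  then show I': "O_ideal ?I'"
    by (rule O_ideal_ideal_mult_if_subset[OF I(1) O_module_ideal_inv])
  have "I \<subseteq> ?I'"
  proof
    fix x assume "x \<in> I"
    moreover have "1 \<in> ideal_inv P" using O_subset_ideal_inv[OF P'(1)] by blast
    ultimately have "x * 1 \<in> ?I'" by (rule mult_in_ideal_mult)
    then show "x \<in> ?I'" by simp
  qed
  moreover have "?I' \<noteq> I"
  proof
    assume eq: "?I' = I"
    have "ideal_inv P \<subseteq> \<O>"
    proof
      fix y assume y: "y \<in> ideal_inv P"
      show "y \<in> \<O>"
      proof (rule O_if_stabilises_ideal[OF I])
        show "y \<in> F" using y by (simp add: ideal_inv_def)
        fix x assume "x \<in> I"
        then have "x * y \<in> ?I'" using y by (rule mult_in_ideal_mult)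
        then show "y * x \<in> I" using eq by (simp add: mult.commute)
      qed
    qed
    then have "ideal_mult P (ideal_inv P) \<subseteq> ideal_mult P \<O>" by (rule ideal_mult_mono[OF order.refl])
    then have "\<O> \<subseteq> P"
      using ideal_mult_ideal_inv_prime[OF P(1)] ideal_mult_O_right[OF O_ideal_imp_O_module[OF P'(1)]]
      by simp
    then show False using P'(2) O_idealD(1)[OF P'(1)] by blast
  qed
  ultimately show "I \<subset> ?I'" by blast
qed

theorem ideal_invertible:
  assumes "O_ideal I" "I \<noteq> {0}"
  shows "\<exists>J. O_module J \<and> ideal_mult I J = \<O>"
  using assms
proof (induction "card (ideals_above I)" arbitrary: I rule: less_induct)
  case less
  note I = less.prems
  show ?case
  proof (cases "I = \<O>")
    case True
    then show ?thesis
      using O_ideal_imp_O_module[OF O_ideal_O] ideal_mult_O_left[OF O_ideal_imp_O_module[OF O_ideal_O]]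
      by blast
  next
    case False
    obtain P where P: "prime_ideal F P" "I \<subseteq> P" using exists_prime_ideal_above[OF I False] by blast
    note I' = ideal_mult_ideal_inv_prime_grows[OF I P]
    have "ideal_mult I (ideal_inv P) \<noteq> {0}" using O_ideal_nonzero_mono[OF I] I'(2) by blast
    then obtain J' where J': "O_module J'" "ideal_mult (ideal_mult I (ideal_inv P)) J' = \<O>"
      using less.hyps[OF card_ideals_above_less[OF I I'] I'(1)] by blast
    have "O_module (ideal_mult (ideal_inv P) J')"
      by (rule O_module_ideal_mult[OF O_module_ideal_inv J'(1)])
    moreover have "ideal_mult I (ideal_mult (ideal_inv P) J') = \<O>"
      using J'(2) by (simp add: ideal_mult_assoc)
    ultimately show ?thesis by blast
  qed
qed

end

section \<open>Quotients of ideals by a prime ideal\<close>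

context numfield
begin

lemma ideal_mult_cancel_subset:
  assumes P: "O_ideal P" "P \<noteq> {0}" and A: "O_module A" and B: "O_module B"
    and sub: "ideal_mult P A \<subseteq> ideal_mult P B"
  shows "A \<subseteq> B"
proof -
  obtain J where J: "O_module J" "ideal_mult P J = \<O>" using ideal_invertible[OF P] by blast
  have "A = ideal_mult (ideal_mult P J) A" using J(2) ideal_mult_O_left[OF A] by simp
  also have "\<dots> = ideal_mult J (ideal_mult P A)"
    by (simp only: ideal_mult_assoc ideal_mult_left_commute)
  also have "\<dots> \<subseteq> ideal_mult J (ideal_mult P B)" by (rule ideal_mult_mono[OF order.refl sub])
  also have "\<dots> = ideal_mult (ideal_mult P J) B"
    by (simp only: ideal_mult_assoc ideal_mult_left_commute)
  also have "\<dots> = B" using J(2) ideal_mult_O_left[OF B] by simp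
  finally show ?thesis .
qed

lemma ideal_mult_prime_neq:
  assumes P: "prime_ideal F P" and C: "O_ideal C" "C \<noteq> {0}"
  shows "ideal_mult P C \<noteq> C"
proof
  assume eq: "ideal_mult P C = C"
  obtain J where J: "O_module J" "ideal_mult C J = \<O>" using ideal_invertible[OF C] by blast
  have "P = ideal_mult P \<O>"
    using ideal_mult_O_right[OF O_ideal_imp_O_module[OF prime_idealD(1)[OF P]]] by simp
  also have "\<dots> = ideal_mult (ideal_mult P C) J" using J(2) by (simp only: ideal_mult_assoc)
  also have "\<dots> = \<O>" using eq J(2) by simp
  finally show False using prime_idealD(3)[OF P] by blast
qed

text \<open>Cancelling \<open>H\<close> turns \<open>H P \<subseteq> G \<subseteq> H\<close> into \<open>P \<subseteq> G H\<^sup>-\<^sup>1 \<subseteq> \<O>\<close>, and \<open>P\<close> is maximal.\<close>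
lemma ideal_between_mult_prime:
  assumes P: "prime_ideal F P" and H: "O_ideal H" "H \<noteq> {0}" and G: "O_ideal G"
    and lower: "ideal_mult H P \<subseteq> G" and upper: "G \<subseteq> H"
  shows "G = ideal_mult H P \<or> G = H"
proof -
  obtain J where J: "O_module J" "ideal_mult H J = \<O>" using ideal_invertible[OF H] by blast
  define Q where "Q = ideal_mult G J"
  have "Q \<subseteq> ideal_mult H J" unfolding Q_def by (rule ideal_mult_mono[OF upper order.refl])
  then have Q: "O_ideal Q"
    unfolding Q_def using J(2) by (intro O_ideal_ideal_mult_if_subset[OF G J(1)]) simp
  have "P = ideal_mult (ideal_mult H J) P"
    using J(2) ideal_mult_O_left[OF O_ideal_imp_O_module[OF prime_idealD(1)[OF P]]] by simp
  also have "\<dots> = ideal_mult (ideal_mult H P) J"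
    by (simp only: ideal_mult_assoc ideal_mult_commute[of J P])
  also have "\<dots> \<subseteq> Q" unfolding Q_def by (rule ideal_mult_mono[OF lower order.refl])
  finally have "Q = P \<or> Q = \<O>" using prime_ideal_maximal[OF P Q] by blast
  moreover have "G = ideal_mult H Q"
  proof -
    have "G = ideal_mult (ideal_mult H J) G" using J(2) ideal_mult_O_left[OF O_ideal_imp_O_module[OF G]]
      by simp
    also have "\<dots> = ideal_mult H Q" unfolding Q_def
      by (simp only: ideal_mult_assoc ideal_mult_commute[of J G])
    finally show ?thesis .
  qed
  ultimately show ?thesis using ideal_mult_O_right[OF O_ideal_imp_O_module[OF H(1)]] by auto
qed

definition ideal_quot :: "complex set \<Rightarrow> complex set \<Rightarrow> complex set" where
  "ideal_quot G P = {r \<in> \<O>. \<forall>p\<in>P. r * p \<in> G}"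

lemma ideal_subset_ideal_quot:
  assumes "O_ideal G" "P \<subseteq> \<O>"
  shows "G \<subseteq> ideal_quot G P"
  using assms O_idealD(1) O_ideal_mult_right unfolding ideal_quot_def by blast

lemma ideal_quot_ideal_mult_prime:
  assumes P: "prime_ideal F P" and G: "O_ideal G" "G \<noteq> {0}"
  shows "ideal_quot (ideal_mult P G) P = G"
proof
  note P' = prime_idealD(1,2)[OF P]
  show "G \<subseteq> ideal_quot (ideal_mult P G) P"
  proof
    fix r assume r: "r \<in> G"
    have "r * p \<in> ideal_mult P G" if "p \<in> P" for p
      using mult_in_ideal_mult[OF that r] by (simp add: mult.commute)
    then show "r \<in> ideal_quot (ideal_mult P G) P"
      using r O_idealD(1)[OF G(1)] by (auto simp: ideal_quot_def)
  qed
  show "ideal_quot (ideal_mult P G) P \<subseteq> G"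
  proof
    fix r assume "r \<in> ideal_quot (ideal_mult P G) P"
    then have r_O: "r \<in> \<O>" and rP: "\<And>p. p \<in> P \<Longrightarrow> r * p \<in> ideal_mult P G"
      by (auto simp: ideal_quot_def)
    have PG: "O_module (ideal_mult P G)"
      by (rule O_module_ideal_mult[OF O_ideal_imp_O_module[OF P'(1)] O_ideal_imp_O_module[OF G(1)]])
    have "ideal_mult P (principal r) \<subseteq> ideal_mult P G"
    proof (rule ideal_mult_least)
      fix p x assume p: "p \<in> P" and "x \<in> principal r"
      then obtain s where s: "s \<in> \<O>" "x = r * s" unfolding principal_def by blast
      have "s * (r * p) \<in> ideal_mult P G" using O_moduleD(4)[OF PG s(1) rP[OF p]] .
      then show "p * x \<in> ideal_mult P G" using s(2) by (simp add: algebra_simps)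
    qed auto
    then have "principal r \<subseteq> G"
      by (rule ideal_mult_cancel_subset[OF P' O_ideal_imp_O_module O_ideal_imp_O_module,
            OF O_ideal_principal[OF r_O] G(1)])
    then show "r \<in> G" using principal_self by blast
  qed
qed

lemma ideal_quot_prime_not_dvd:
  assumes P: "prime_ideal F P" and G: "O_ideal G" "G \<noteq> {0}" and not_dvd: "\<not> ideal_dvd F P G"
  shows "ideal_quot G P = G"
proof
  note P' = prime_idealD(1)[OF P]
  show "G \<subseteq> ideal_quot G P" by (rule ideal_subset_ideal_quot[OF G(1) O_idealD(1)[OF P']])
  show "ideal_quot G P \<subseteq> G"
  proof
    fix r assume "r \<in> ideal_quot G P"
    then have r_O: "r \<in> \<O>" and rP: "\<And>p. p \<in> P \<Longrightarrow> r * p \<in> G" by (auto simp: ideal_quot_def)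
    show "r \<in> G"
    proof (rule ccontr)
      assume "r \<notin> G"
      let ?H = "ideal_add G (principal r)"
      have H: "O_ideal ?H" "G \<subseteq> ?H" "r \<in> ?H" using ideal_add_principal[OF G(1) r_O \<open>r \<notin> G\<close>] by auto
      have H_nonzero: "?H \<noteq> {0}" by (rule O_ideal_nonzero_mono[OF G H(2)])
      have "ideal_mult ?H P \<subseteq> G"
      proof (rule ideal_mult_least)
        show "0 \<in> G" "\<And>a b. a \<in> G \<Longrightarrow> b \<in> G \<Longrightarrow> a + b \<in> G" using O_idealD(2,3)[OF G(1)] by blast+
        fix h p assume "h \<in> ?H" and p: "p \<in> P"
        then obtain a s where as: "a \<in> G" "s \<in> \<O>" "h = a + r * s"
          unfolding ideal_add_def principal_def by blast
        have "p \<in> \<O>" using p O_idealD(1)[OF P'] by blast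
        then have "a * p \<in> G" "s * (r * p) \<in> G"
          using O_ideal_mult_right[OF G(1) as(1)] O_idealD(4)[OF G(1) as(2) rP[OF p]] by blast+
        moreover have "h * p = a * p + s * (r * p)" using as(3) by (simp add: algebra_simps)
        ultimately show "h * p \<in> G" using O_idealD(3)[OF G(1)] by metis
      qed
      then have "G = ideal_mult ?H P \<or> G = ?H"
        by (rule ideal_between_mult_prime[OF P H(1) H_nonzero G(1) _ H(2)])
      then show False
        using not_dvd H(1) H_nonzero H(3) \<open>r \<notin> G\<close> unfolding ideal_dvd_iff
        by (auto simp: ideal_mult_commute)
    qed
  qed
qed

lemma ideal_quot_prime_eq_iff:
  assumes P: "prime_ideal F P" and G: "O_ideal G" "G \<noteq> {0}"
    and f: "O_ideal f" "ideal_mult P G \<subseteq> f"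
  shows "ideal_quot f P = G \<longleftrightarrow> f = ideal_mult P G \<or> (f = G \<and> \<not> ideal_dvd F P G)"
proof
  assume quot: "ideal_quot f P = G"
  have "f \<subseteq> G"
    using ideal_subset_ideal_quot[OF f(1) O_idealD(1)[OF prime_idealD(1)[OF P]]] quot by simp
  then have "f = ideal_mult P G \<or> f = G"
    using ideal_between_mult_prime[OF P G f(1)] f(2) by (simp add: ideal_mult_commute)
  moreover have "\<not> ideal_dvd F P G" if "f = G"
  proof
    assume "ideal_dvd F P G"
    then obtain C where C: "O_ideal C" "C \<noteq> {0}" "G = ideal_mult P C"
      unfolding ideal_dvd_iff by blast
    then have "C = G" using ideal_quot_ideal_mult_prime[OF P C(1,2)] quot that by simp
    then show False using ideal_mult_prime_neq[OF P C(1,2)] C(3) by simp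
  qed
  ultimately show "f = ideal_mult P G \<or> (f = G \<and> \<not> ideal_dvd F P G)" by blast
next
  assume "f = ideal_mult P G \<or> (f = G \<and> \<not> ideal_dvd F P G)"
  then show "ideal_quot f P = G"
    using ideal_quot_ideal_mult_prime[OF P G] ideal_quot_prime_not_dvd[OF P G] by blast
qed

end

section \<open>Conductors of characters\<close>

context numfield
begin

lemma fractional_ideal_O_module: "fractional_ideal F a \<Longrightarrow> O_module a"
  unfolding fractional_ideal_def O_module_def by blast

lemma all_charsD:
  assumes "(a, \<xi>) \<in> all_chars F"
  shows "fractional_ideal F a" "character a \<xi>" "O_module a"
  using assms fractional_ideal_O_module unfolding all_chars_def by auto

lemma character_add: "character a \<xi> \<Longrightarrow> x \<in> a \<Longrightarrow> y \<in> a \<Longrightarrow> \<xi> (x + y) = \<xi> x * \<xi> y"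
  unfolding character_def by blast

lemma character_0: "character a \<xi> \<Longrightarrow> 0 \<in> a \<Longrightarrow> \<xi> 0 = 1"
  using character_add[of a \<xi> 0 0] unfolding character_def by force

definition conductor :: "complex set \<times> (complex \<Rightarrow> complex) \<Rightarrow> complex set" where
  "conductor z = {r \<in> \<O>. \<forall>\<alpha>\<in>fst z. snd z (r * \<alpha>) = 1}"

lemma trivial_on_ideal_mult_iff:
  assumes z: "(a, \<xi>) \<in> all_chars F" and g: "O_ideal g"
  shows "(\<forall>x\<in>ideal_mult g a. \<xi> x = 1) \<longleftrightarrow> g \<subseteq> conductor (a, \<xi>)"
proof
  assume "\<forall>x\<in>ideal_mult g a. \<xi> x = 1"
  then show "g \<subseteq> conductor (a, \<xi>)"
    using O_idealD(1)[OF g] mult_in_ideal_mult[of _ g _ a] by (auto simp: conductor_def)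
next
  note z' = all_charsD[OF z]
  assume sub: "g \<subseteq> conductor (a, \<xi>)"
  have "x \<in> a \<and> \<xi> x = 1" if "x \<in> ideal_mult g a" for x
    using that
  proof (induction rule: ideal_mult_induct)
    case zero
    then show ?case using O_moduleD(2)[OF z'(3)] character_0[OF z'(2)] by simp
  next
    case (prod r \<alpha>)
    then have "r \<in> \<O>" "\<xi> (r * \<alpha>) = 1" using sub by (auto simp: conductor_def)
    then show ?case using O_moduleD(4)[OF z'(3) _ prod(2)] by blast
  next
    case (add x y)
    then show ?case using O_moduleD(3)[OF z'(3)] character_add[OF z'(2)] by auto
  qed
  then show "\<forall>x\<in>ideal_mult g a. \<xi> x = 1" by blast
qed

lemma O_ideal_conductor:
  assumes z: "z \<in> all_chars F"
  shows "O_ideal (conductor z)"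
proof -
  obtain a \<xi> where z_eq: "z = (a, \<xi>)" by (cases z)
  note z' = all_charsD[OF z[unfolded z_eq]]
  have add: "\<xi> ((r + s) * \<alpha>) = 1"
    if "r \<in> \<O>" "s \<in> \<O>" "\<alpha> \<in> a" "\<xi> (r * \<alpha>) = 1" "\<xi> (s * \<alpha>) = 1" for r s \<alpha>
    using that character_add[OF z'(2) O_moduleD(4)[OF z'(3)] O_moduleD(4)[OF z'(3)]]
    by (simp add: distrib_right)
  show ?thesis
  proof (rule O_idealI)
    show "conductor z \<subseteq> \<O>" by (auto simp: conductor_def)
    show "0 \<in> conductor z"
      using character_0[OF z'(2) O_moduleD(2)[OF z'(3)]] by (simp add: conductor_def z_eq)
    show "r + s \<in> conductor z" if "r \<in> conductor z" "s \<in> conductor z" for r s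
      using that add by (auto simp: conductor_def z_eq)
    show "t * r \<in> conductor z" if t: "t \<in> \<O>" and r: "r \<in> conductor z" for t r
    proof -
      have r_triv: "\<xi> (r * \<alpha>) = 1" if "\<alpha> \<in> a" for \<alpha> using r that by (simp add: conductor_def z_eq)
      have "\<xi> ((t * r) * \<alpha>) = 1" if "\<alpha> \<in> a" for \<alpha>
      proof -
        have "\<xi> (r * (t * \<alpha>)) = 1" using r_triv[OF O_moduleD(4)[OF z'(3) t that]] .
        moreover have "(t * r) * \<alpha> = r * (t * \<alpha>)" by (simp add: mult_ac)
        ultimately show ?thesis by metis
      qed
      then show ?thesis using t r by (auto simp: conductor_def z_eq)
    qed
  qed
qed

lemma Tchars_iff:
  assumes g: "O_ideal g"
  shows "z \<in> Tchars F g \<longleftrightarrow> z \<in> all_chars F \<and> g \<subseteq> conductor z"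
  using trivial_on_ideal_mult_iff[OF _ g] unfolding Tchars_def by (cases z) auto

lemma T0chars_iff:
  assumes g: "O_ideal g" "g \<noteq> {0}"
  shows "z \<in> T0chars F g \<longleftrightarrow> z \<in> all_chars F \<and> conductor z = g"
proof -
  obtain a \<xi> where z_eq: "z = (a, \<xi>)" by (cases z)
  have "(\<forall>g'. integral_ideal F g' \<and> g \<subset> g' \<longrightarrow> \<not> (\<forall>x\<in>ideal_mult g' a. \<xi> x = 1))
      \<longleftrightarrow> conductor z = g" if z: "z \<in> all_chars F" and g_sub: "g \<subseteq> conductor z"
  proof
    assume primitive: "\<forall>g'. integral_ideal F g' \<and> g \<subset> g' \<longrightarrow> \<not> (\<forall>x\<in>ideal_mult g' a. \<xi> x = 1)"
    have "integral_ideal F (conductor z)"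
      unfolding integral_ideal_iff using O_ideal_conductor[OF z] O_ideal_nonzero_mono[OF g g_sub] by blast
    moreover have "\<forall>x\<in>ideal_mult (conductor z) a. \<xi> x = 1"
      using trivial_on_ideal_mult_iff[of a \<xi> "conductor z"] z O_ideal_conductor[OF z] z_eq by simp
    ultimately show "conductor z = g" using primitive g_sub by blast
  next
    assume "conductor z = g"
    then show "\<forall>g'. integral_ideal F g' \<and> g \<subset> g' \<longrightarrow> \<not> (\<forall>x\<in>ideal_mult g' a. \<xi> x = 1)"
      using trivial_on_ideal_mult_iff[of a \<xi>] z z_eq unfolding integral_ideal_iff by auto
  qed
  then show ?thesis
    unfolding T0chars_def using Tchars_iff[OF g(1), of z] z_eq by auto
qed

lemma restr_in_all_chars:
  assumes z: "(a, \<xi>) \<in> all_chars F" and p: "O_ideal p" "p \<noteq> {0}"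
  shows "restr p (a, \<xi>) \<in> all_chars F"
proof -
  note z' = all_charsD[OF z]
  define b where "b = ideal_mult p a"
  have b_a: "b \<subseteq> a" unfolding b_def by (rule ideal_mult_subset_right[OF p(1) z'(3)])
  have b: "O_module b" unfolding b_def by (rule O_module_ideal_mult[OF O_ideal_imp_O_module[OF p(1)] z'(3)])
  obtain d where d: "d \<in> \<O>" "d \<noteq> 0" "\<forall>x\<in>a. d * x \<in> \<O>" "a \<noteq> {0}"
    using z'(1) unfolding fractional_ideal_def by blast
  obtain x where x: "x \<in> p" "x \<noteq> 0" using O_ideal_nonzero_elem[OF p] by blast
  obtain y where y: "y \<in> a" "y \<noteq> 0" using d(4) O_moduleD(2)[OF z'(3)] by blast
  have "b \<noteq> {0}" unfolding b_def by (rule ideal_mult_nonzero[OF x y])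
  moreover have "\<exists>d\<in>\<O>. d \<noteq> 0 \<and> (\<forall>x\<in>b. d * x \<in> \<O>)" using d(1,2,3) b_a by blast
  ultimately have "fractional_ideal F b"
    unfolding fractional_ideal_def using O_moduleD(1,2)[OF b] O_moduleD(3,4)[OF b] by blast
  moreover have "character b (\<lambda>x. if x \<in> b then \<xi> x else 1)"
    unfolding character_def
  proof (intro conjI ballI allI impI)
    fix x y assume "x \<in> b" "y \<in> b"
    moreover from this have "x + y \<in> b" "x \<in> a" "y \<in> a" using O_moduleD(3)[OF b] b_a by auto
    ultimately show "(if x + y \<in> b then \<xi> (x + y) else 1)
        = (if x \<in> b then \<xi> x else 1) * (if y \<in> b then \<xi> y else 1)"
      using character_add[OF z'(2)] by simp
  qed (use z'(2) b_a in \<open>auto simp: character_def\<close>)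
  moreover have "restr p (a, \<xi>) = (b, \<lambda>x. if x \<in> b then \<xi> x else 1)"
    unfolding restr_def b_def fst_conv snd_conv by (rule refl)
  ultimately show ?thesis unfolding all_chars_def by simp
qed

lemma conductor_restr:
  assumes z: "(a, \<xi>) \<in> all_chars F" and p: "O_ideal p"
  shows "conductor (restr p (a, \<xi>)) = ideal_quot (conductor (a, \<xi>)) p"
proof -
  note z' = all_charsD[OF z]
  define b where "b = ideal_mult p a"
  have b: "O_module b" unfolding b_def by (rule O_module_ideal_mult[OF O_ideal_imp_O_module[OF p(1)] z'(3)])
  have restr_eq: "restr p (a, \<xi>) = (b, \<lambda>x. if x \<in> b then \<xi> x else 1)"
    unfolding restr_def b_def fst_conv snd_conv by (rule refl)
  have "(\<forall>\<beta>\<in>b. \<xi> (r * \<beta>) = 1) \<longleftrightarrow> (\<forall>\<pi>\<in>p. r * \<pi> \<in> conductor (a, \<xi>))" if r: "r \<in> \<O>" for r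
  proof
    assume "\<forall>\<beta>\<in>b. \<xi> (r * \<beta>) = 1"
    then show "\<forall>\<pi>\<in>p. r * \<pi> \<in> conductor (a, \<xi>)"
      using r O_idealD(1)[OF p] mult_in_ideal_mult[of _ p _ a]
      by (auto simp: conductor_def b_def mult.assoc)
  next
    assume rp: "\<forall>\<pi>\<in>p. r * \<pi> \<in> conductor (a, \<xi>)"
    have "\<beta> \<in> a \<and> \<xi> (r * \<beta>) = 1" if "\<beta> \<in> ideal_mult p a" for \<beta>
      using that
    proof (induction rule: ideal_mult_induct)
      case zero
      then show ?case using O_moduleD(2)[OF z'(3)] character_0[OF z'(2)] by simp
    next
      case (prod \<pi> \<alpha>)
      then have "\<xi> ((r * \<pi>) * \<alpha>) = 1" "\<pi> * \<alpha> \<in> a"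
        using rp O_moduleD(4)[OF z'(3) _ prod(2)] O_idealD(1)[OF p] by (auto simp: conductor_def)
      then show ?case by (simp add: mult.assoc)
    next
      case (add x y)
      then have "r * x \<in> a" "r * y \<in> a" using O_moduleD(4)[OF z'(3) r] by auto
      then show ?case using add O_moduleD(3)[OF z'(3)] character_add[OF z'(2)] by (simp add: distrib_left)
    qed
    then show "\<forall>\<beta>\<in>b. \<xi> (r * \<beta>) = 1" unfolding b_def by blast
  qed
  then show ?thesis
    using O_moduleD(4)[OF b] unfolding restr_eq conductor_def ideal_quot_def by auto
qed

lemma totally_positive_1: "totally_positive F 1"
  unfolding totally_positive_def embedding_def by auto

lemma totally_positive_inverse:
  assumes x: "totally_positive F x"
  shows "totally_positive F (inverse x)"
  unfolding totally_positive_def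
proof (intro conjI allI impI)
  have x_F: "x \<in> F" and x_nonzero: "x \<noteq> 0" using x by (auto simp: totally_positive_def)
  then show "inverse x \<in> F" "inverse x \<noteq> 0" by auto
  fix \<sigma> assume \<sigma>: "embedding F \<sigma>"
  have \<sigma>x: "\<sigma> x \<in> \<real>" "Re (\<sigma> x) > 0" using x \<sigma> by (auto simp: totally_positive_def)
  have "\<sigma> x * \<sigma> (inverse x) = \<sigma> (x * inverse x)"
    using \<sigma> x_F F_inverse[OF x_F] unfolding embedding_def by simp
  also have "\<dots> = 1" using \<sigma> x_nonzero unfolding embedding_def by simp
  finally have inv: "\<sigma> (inverse x) = inverse (\<sigma> x)" by (rule inverse_unique[symmetric])
  obtain t where t: "\<sigma> x = of_real t" using \<sigma>x(1) by (auto elim: Reals_cases)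
  then have "\<sigma> (inverse x) = of_real (inverse t)" "t > 0" using inv \<sigma>x(2) by (simp_all add: of_real_inverse)
  then show "\<sigma> (inverse x) \<in> \<real>" "Re (\<sigma> (inverse x)) > 0" by simp_all
qed

lemma totally_positive_mult:
  assumes x: "totally_positive F x" and y: "totally_positive F y"
  shows "totally_positive F (x * y)"
  unfolding totally_positive_def
proof (intro conjI allI impI)
  have x_F: "x \<in> F" "x \<noteq> 0" and y_F: "y \<in> F" "y \<noteq> 0"
    using x y by (auto simp: totally_positive_def)
  then show "x * y \<in> F" "x * y \<noteq> 0" by auto
  fix \<sigma> assume \<sigma>: "embedding F \<sigma>"
  have \<sigma>x: "\<sigma> x \<in> \<real>" "Re (\<sigma> x) > 0" and \<sigma>y: "\<sigma> y \<in> \<real>" "Re (\<sigma> y) > 0"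
    using x y \<sigma> by (auto simp: totally_positive_def)
  obtain t u where t: "\<sigma> x = of_real t" and u: "\<sigma> y = of_real u"
    using \<sigma>x(1) \<sigma>y(1) by (auto elim!: Reals_cases)
  have "\<sigma> (x * y) = of_real (t * u)" using \<sigma> x_F(1) y_F(1) t u unfolding embedding_def by simp
  then show "\<sigma> (x * y) \<in> \<real>" "Re (\<sigma> (x * y)) > 0" using \<sigma>x(2) \<sigma>y(2) t u by simp_all
qed

lemma orbit_rel_refl: "z \<in> all_chars F \<Longrightarrow> orbit_rel F z z"
  unfolding orbit_rel_def using totally_positive_1 by (intro conjI exI[of _ 1]) auto

lemma orbit_rel_sym:
  assumes "orbit_rel F z w"
  shows "orbit_rel F w z"
proof -
  obtain x where x: "totally_positive F x" "fst w = (\<lambda>\<alpha>. x * \<alpha>) ` fst z"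
    "\<And>\<alpha>. \<alpha> \<in> fst z \<Longrightarrow> snd w (x * \<alpha>) = snd z \<alpha>"
    and zw: "z \<in> all_chars F" "w \<in> all_chars F"
    using assms unfolding orbit_rel_def by blast
  have x_nonzero: "x \<noteq> 0" using x(1) by (simp add: totally_positive_def)
  have "(\<lambda>\<alpha>. inverse x * \<alpha>) ` fst w = (\<lambda>\<alpha>. inverse x * (x * \<alpha>)) ` fst z"
    unfolding x(2) image_image ..
  also have "\<dots> = fst z" using x_nonzero by (simp add: mult.assoc[symmetric] left_inverse)
  finally have "fst z = (\<lambda>\<alpha>. inverse x * \<alpha>) ` fst w" ..
  moreover have "snd z (inverse x * \<beta>) = snd w \<beta>" if \<beta>: "\<beta> \<in> fst w" for \<beta>
  proof -
    obtain \<alpha> where \<alpha>: "\<alpha> \<in> fst z" "\<beta> = x * \<alpha>" using \<beta> unfolding x(2) by blast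
    then have "inverse x * \<beta> = \<alpha>" using x_nonzero by (simp add: mult.assoc[symmetric] left_inverse)
    then have "snd z (inverse x * \<beta>) = snd z \<alpha>" by simp
    also have "\<dots> = snd w \<beta>" using x(3)[OF \<alpha>(1)] \<alpha>(2) by simp
    finally show ?thesis .
  qed
  ultimately show ?thesis
    unfolding orbit_rel_def using zw totally_positive_inverse[OF x(1)] by blast
qed

lemma orbit_rel_trans:
  assumes "orbit_rel F z w" "orbit_rel F w u"
  shows "orbit_rel F z u"
proof -
  obtain x where x: "totally_positive F x" "fst w = (\<lambda>\<alpha>. x * \<alpha>) ` fst z"
    "\<And>\<alpha>. \<alpha> \<in> fst z \<Longrightarrow> snd w (x * \<alpha>) = snd z \<alpha>" and z: "z \<in> all_chars F"
    using assms(1) unfolding orbit_rel_def by blast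
  obtain y where y: "totally_positive F y" "fst u = (\<lambda>\<alpha>. y * \<alpha>) ` fst w"
    "\<And>\<alpha>. \<alpha> \<in> fst w \<Longrightarrow> snd u (y * \<alpha>) = snd w \<alpha>" and u: "u \<in> all_chars F"
    using assms(2) unfolding orbit_rel_def by blast
  have "fst u = (\<lambda>\<alpha>. (y * x) * \<alpha>) ` fst z"
    unfolding y(2) x(2) image_image by (simp add: mult.assoc)
  moreover have "snd u ((y * x) * \<alpha>) = snd z \<alpha>" if "\<alpha> \<in> fst z" for \<alpha>
  proof -
    have "x * \<alpha> \<in> fst w" unfolding x(2) using that by (rule imageI)
    then show ?thesis using y(3) x(3)[OF that] by (simp add: mult.assoc)
  qed
  ultimately show ?thesis
    unfolding orbit_rel_def using z u totally_positive_mult[OF y(1) x(1)] by blast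
qed

lemma orbit_eq_iff:
  assumes "z \<in> all_chars F" "w \<in> all_chars F"
  shows "orbit F z = orbit F w \<longleftrightarrow> orbit_rel F z w"
  using orbit_rel_refl[OF assms(2)] orbit_rel_sym orbit_rel_trans unfolding orbit_def by blast

lemma conductor_orbit_rel:
  assumes "orbit_rel F z w"
  shows "conductor w = conductor z"
proof -
  obtain x where x: "fst w = (\<lambda>\<alpha>. x * \<alpha>) ` fst z"
    "\<And>\<alpha>. \<alpha> \<in> fst z \<Longrightarrow> snd w (x * \<alpha>) = snd z \<alpha>" and z: "z \<in> all_chars F"
    using assms unfolding orbit_rel_def by blast
  have z_module: "O_module (fst z)" using all_charsD(3)[of "fst z" "snd z"] z by simp
  have "(\<forall>\<beta>\<in>fst w. snd w (r * \<beta>) = 1) \<longleftrightarrow> (\<forall>\<alpha>\<in>fst z. snd z (r * \<alpha>) = 1)" if r: "r \<in> \<O>" for r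
  proof -
    have "snd w (r * (x * \<alpha>)) = snd z (r * \<alpha>)" if "\<alpha> \<in> fst z" for \<alpha>
      using x(2)[OF O_moduleD(4)[OF z_module r that]] by (simp add: mult.left_commute)
    then show ?thesis unfolding x(1) by auto
  qed
  then show ?thesis unfolding conductor_def by auto
qed

end

section \<open>Restricting characters to \<open>\<pp> \<aa>\<close>\<close>

context numfield
begin

lemma ideal_mult_nonzero_ideals:
  assumes "O_ideal A" "A \<noteq> {0}" "O_ideal B" "B \<noteq> {0}"
  shows "ideal_mult A B \<noteq> {0}"
proof -
  obtain a b where "a \<in> A" "a \<noteq> 0" "b \<in> B" "b \<noteq> 0" using O_ideal_nonzero_elem assms by meson
  then show ?thesis by (rule ideal_mult_nonzero)
qed

lemma mem_scrT:
  assumes "O_ideal g"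
  shows "Ob \<in> scrT F g \<longleftrightarrow> (\<exists>z. z \<in> all_chars F \<and> g \<subseteq> conductor z \<and> Ob = orbit F z)"
  unfolding scrT_def using Tchars_iff[OF assms] by blast

lemma mem_scrT0:
  assumes "O_ideal g" "g \<noteq> {0}"
  shows "Ob \<in> scrT0 F g \<longleftrightarrow> (\<exists>z. z \<in> all_chars F \<and> conductor z = g \<and> Ob = orbit F z)"
  unfolding scrT0_def using T0chars_iff[OF assms] by blast

lemma scrT0_disjoint:
  assumes g: "O_ideal g" "g \<noteq> {0}" and g': "O_ideal g'" "g' \<noteq> {0}" and "g \<noteq> g'"
  shows "scrT0 F g \<inter> scrT0 F g' = {}"
proof (rule ccontr)
  assume "scrT0 F g \<inter> scrT0 F g' \<noteq> {}"
  then obtain Ob where Ob: "Ob \<in> scrT0 F g" "Ob \<in> scrT0 F g'" by blast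
  from Ob(1) obtain z where z: "z \<in> all_chars F" "conductor z = g" "Ob = orbit F z"
    unfolding mem_scrT0[OF g] by blast
  from Ob(2) obtain z' where z': "z' \<in> all_chars F" "conductor z' = g'" "Ob = orbit F z'"
    unfolding mem_scrT0[OF g'] by blast
  have "orbit_rel F z z'" using orbit_eq_iff[OF z(1) z'(1)] z(3) z'(3) by simp
  then have "conductor z' = conductor z" by (rule conductor_orbit_rel)
  then show False using z(2) z'(2) \<open>g \<noteq> g'\<close> by simp
qed

text \<open>\<^const>\<open>restr_orbit\<close> restricts an arbitrary representative of the orbit; this is harmless
  because the conductor is an orbit invariant.\<close>
lemma restr_orbit_in_scrT0_iff:
  assumes z: "z \<in> all_chars F" and p: "O_ideal p" "p \<noteq> {0}" and g: "O_ideal g" "g \<noteq> {0}"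
  shows "restr_orbit F p (orbit F z) \<in> scrT0 F g \<longleftrightarrow> ideal_quot (conductor z) p = g"
proof -
  define w where "w = (SOME w. w \<in> orbit F z)"
  have "z \<in> orbit F z" using orbit_rel_refl[OF z] by (simp add: orbit_def)
  then have "w \<in> orbit F z" unfolding w_def by (rule someI)
  then have zw: "orbit_rel F z w" by (simp add: orbit_def)
  then have w: "w \<in> all_chars F" by (simp add: orbit_rel_def)
  have restr_w: "restr p w \<in> all_chars F" using restr_in_all_chars[OF _ p, of "fst w" "snd w"] w by simp
  have "conductor (restr p w) = ideal_quot (conductor w) p"
    using conductor_restr[OF _ p(1), of "fst w" "snd w"] w by simp
  also have "\<dots> = ideal_quot (conductor z) p" using conductor_orbit_rel[OF zw] by simp
  finally have conductor_eq: "conductor (restr p w) = ideal_quot (conductor z) p" .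
  have restr_orbit_eq: "restr_orbit F p (orbit F z) = orbit F (restr p w)"
    by (simp add: restr_orbit_def w_def)
  show ?thesis
  proof
    assume "restr_orbit F p (orbit F z) \<in> scrT0 F g"
    then obtain u where u: "u \<in> all_chars F" "conductor u = g" "orbit F (restr p w) = orbit F u"
      unfolding restr_orbit_eq mem_scrT0[OF g] by blast
    then have "orbit_rel F (restr p w) u" using orbit_eq_iff[OF restr_w u(1)] by blast
    then show "ideal_quot (conductor z) p = g" using conductor_orbit_rel u(2) conductor_eq by simp
  next
    assume "ideal_quot (conductor z) p = g"
    then show "restr_orbit F p (orbit F z) \<in> scrT0 F g"
      unfolding restr_orbit_eq mem_scrT0[OF g] using restr_w conductor_eq by blast
  qed
qed

lemma mem_scrT':
  assumes p: "O_ideal p" "p \<noteq> {0}" and g: "O_ideal g" "g \<noteq> {0}"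
  shows "Ob \<in> scrT' F p g \<longleftrightarrow> (\<exists>z. z \<in> all_chars F \<and> ideal_mult p g \<subseteq> conductor z
      \<and> ideal_quot (conductor z) p = g \<and> Ob = orbit F z)"
  unfolding scrT'_def mem_scrT[OF O_ideal_ideal_mult[OF p(1) g(1)]]
  using restr_orbit_in_scrT0_iff[OF _ p g] by blast

theorem mem_scrT'_iff:
  assumes p: "prime_ideal F p" and g0: "O_ideal g0" "g0 \<noteq> {0}"
  shows "Ob \<in> scrT' F p g0 \<longleftrightarrow>
    Ob \<in> scrT0 F (ideal_mult p g0) \<or> (\<not> ideal_dvd F p g0 \<and> Ob \<in> scrT0 F g0)"
proof -
  note p' = prime_idealD(1,2)[OF p]
  have g1: "O_ideal (ideal_mult p g0)" "ideal_mult p g0 \<noteq> {0}"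
    using O_ideal_ideal_mult[OF p'(1) g0(1)] ideal_mult_nonzero_ideals[OF p' g0] by blast+
  have g1_g0: "ideal_mult p g0 \<subseteq> g0"
    by (rule ideal_mult_subset_right[OF p'(1) O_ideal_imp_O_module[OF g0(1)]])
  have conductor_cases: "ideal_mult p g0 \<subseteq> conductor z \<and> ideal_quot (conductor z) p = g0 \<longleftrightarrow>
      conductor z = ideal_mult p g0 \<or> (conductor z = g0 \<and> \<not> ideal_dvd F p g0)"
    if "z \<in> all_chars F" for z
    using ideal_quot_prime_eq_iff[OF p g0 O_ideal_conductor[OF that]] g1_g0 by blast
  show ?thesis
    unfolding mem_scrT'[OF p' g0] mem_scrT0[OF g1] mem_scrT0[OF g0] using conductor_cases by blast
qed

end

theorem lemma6p27:
  fixes F p g0 g1 :: "complex set"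
  assumes "totally_real_field F"
    and "integral_ideal F g0"
    and "prime_ideal F p"
    and "g1 = ideal_mult p g0"
  shows "(ideal_dvd F p g0 \<longrightarrow> scrT' F p g0 = scrT0 F g1)
       \<and> (\<not> ideal_dvd F p g0 \<longrightarrow>
            scrT' F p g0 = scrT0 F g1 \<union> scrT0 F g0 \<and> scrT0 F g1 \<inter> scrT0 F g0 = {})"
proof -
  interpret numfield F using assms(1) unfolding totally_real_field_def by unfold_locales blast
  have g0: "O_ideal g0" "g0 \<noteq> {0}" using assms(2) integral_ideal_iff by blast+
  note p = prime_idealD(1,2)[OF assms(3)]
  have g1: "O_ideal g1" "g1 \<noteq> {0}"
    unfolding assms(4) using O_ideal_ideal_mult[OF p(1) g0(1)] ideal_mult_nonzero_ideals[OF p g0] by blast+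
  have "g1 \<noteq> g0" unfolding assms(4) by (rule ideal_mult_prime_neq[OF assms(3) g0])
  then have "scrT0 F g1 \<inter> scrT0 F g0 = {}" by (rule scrT0_disjoint[OF g1 g0])
  moreover have "Ob \<in> scrT' F p g0 \<longleftrightarrow> Ob \<in> scrT0 F g1 \<or> (\<not> ideal_dvd F p g0 \<and> Ob \<in> scrT0 F g0)"
    for Ob
    unfolding assms(4) by (rule mem_scrT'_iff[OF assms(3) g0])
  ultimately show ?thesis by blast
qed

end
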